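(* On the line ${\rm O}x$, let ${\rm A},{\rm B}$ have abscissas $0<x_{\rm B}<x_{\rm A}$ and let $v_E=\sqrt{2/x_{\rm A}}$. For each initial velocity $v_{\rm A}\in\,]-\infty,v_E[$, the rectilinear solution of $\ddot x=-1/x^2$ with $x(t_{\rm A})=x_{\rm A}$, $\dot x(t_{\rm A})=v_{\rm A}$ reaches ${\rm B}$ before any collision with ${\rm O}$ (after culminating if $v_{\rm A}\ge0$); let $T_D^R(v_{\rm A})>0$ be the first time after $t_{\rm A}$, minus $t_{\rm A}$, at which it is at ${\rm B}$. The direct Keplerian arcs from ${\rm A}$ to ${\rm B}$ are exactly these arcs, parametrized by $v_{\rm A}\in\,]-\infty,v_E[$. The function $T_D^R$ is increasing with ${\rm d}T_D^R/{\rm d}v_{\rm A}>0$ everywhere, $T_D^R(v_{\rm A})\to0$ as $v_{\rm A}\to-\infty$ and $T_D^R(v_{\rm A})\to+\infty$ as $v_{\rm A}\to v_E^-$.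
   Context: Units are normalized so that the Kepler problem with fixed center ${\rm O}$ (origin) is $\ddot q=-q/|q|^3$; on a line through ${\rm O}$ with $x>0$ it reads $\ddot x=-1/x^2$. A Keplerian arc from ${\rm A}$ to ${\rm B}$ is a solution on a compact time interval $[t_{\rm A},t_{\rm B}]$ with $q(t_{\rm A})={\rm A}$, $q(t_{\rm B})={\rm B}$; its elapsed time is $t_{\rm B}-t_{\rm A}$. Rectilinear motions are extended after collision with ${\rm O}$ (the body bounces back along the same ray, keeping the same energy). An arc is indirect if its convex hull contains ${\rm O}$ and direct otherwise; for rectilinear arcs, direct means no collision with ${\rm O}$ occurs. *)

theory Defs
  imports "HOL-Analysis.Analysis"
begin

definition line_sol :: "(real \<Rightarrow> real) \<Rightarrow> (real \<Rightarrow> real) \<Rightarrow> real \<Rightarrow> real \<Rightarrow> bool" where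
  "line_sol x v a b \<longleftrightarrow> a \<le> b \<and>
     (\<forall>t\<in>{a..b}. 0 < x t \<and>
        (x has_real_derivative v t) (at t within {a..b}) \<and>
        (v has_real_derivative (- 1 / (x t)\<^sup>2)) (at t within {a..b}))"

text \<open>T_D^R(vA): the first time (after t_A = 0, the problem being autonomous) at which the
  rectilinear solution starting at xA with velocity vA is at xB, before any collision.\<close>
definition T_DR :: "real \<Rightarrow> real \<Rightarrow> real \<Rightarrow> real" where
  "T_DR xA xB vA = Inf {T. 0 < T \<and> (\<exists>x v. line_sol x v 0 T \<and> x 0 = xA \<and> v 0 = vA \<and> x T = xB)}"

definition kepler_sol :: "(real \<Rightarrow> 'a::euclidean_space) \<Rightarrow> (real \<Rightarrow> 'a) \<Rightarrow> real \<Rightarrow> real \<Rightarrow> bool" where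
  "kepler_sol q p a b \<longleftrightarrow> a \<le> b \<and>
     (\<forall>t\<in>{a..b}. q t \<noteq> 0 \<and>
        (q has_vector_derivative p t) (at t within {a..b}) \<and>
        (p has_vector_derivative (- (1 / norm (q t) ^ 3)) *\<^sub>R q t) (at t within {a..b}))"

definition direct_arc :: "(real \<Rightarrow> 'a::euclidean_space) \<Rightarrow> real \<Rightarrow> real \<Rightarrow> bool" where
  "direct_arc q a b \<longleftrightarrow> 0 \<notin> convex hull (q ` {a..b})"

end

theory Submission
  imports Defs
begin

text \<open>Use Sundman's fictitious time \<open>s\<close>, with \<open>dt = x ds\<close>.  In this time the rectilinear
  Kepler motion with initial position \<open>xA\<close> and velocity \<open>a\<close> becomes the linear equation
  \<open>x'' = \<alpha> x + 1\<close>, \<open>\<alpha> = a\<^sup>2 - 2 / xA\<close> twice the energy, solved explicitly by Stumpff functions;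
  the solution is analytic in \<open>(a, s)\<close> and simply bounces at collisions.  Below the escape
  speed the radius reaches \<open>xB\<close>, transversally, at a first fictitious time, which depends
  continuously on \<open>a\<close>; the implicit function argument then gives the derivative of the
  transfer time, and its positivity reduces to the positivity of \<open>\<partial>x/\<partial>a\<close> at fixed physical
  time, which obeys a cooperative linear system.  Uniqueness of solutions identifies every
  rectilinear arc from \<open>xA\<close> to \<open>xB\<close> with this one.  A direct Keplerian arc stays in an open
  half-space; the angular momentum relative to a direction orthogonal to the ray is then
  conserved and forced to vanish, so the arc is rectilinear.  The limits come from
  \<open>T \<le> (xA - xB) / -a\<close> for \<open>a < 0\<close> and from the apocentre \<open>2 / (vE\<^sup>2 - a\<^sup>2)\<close> that an
  outgoing orbit has to reach first.\<close>

section \<open>Stumpff functions\<close>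

text \<open>\<open>stumpff n z\<close> is the classical Stumpff function \<open>c\<^sub>n(-z)\<close>.\<close>

definition stumpff :: "nat \<Rightarrow> real \<Rightarrow> real" where
  "stumpff n z = (\<Sum>k. z ^ k / fact (2 * k + n))"

lemma summable_stumpff: "summable (\<lambda>k. z ^ k / fact (2 * k + n) :: real)"
proof (rule summable_comparison_test[OF _ summable_exp[of "\<bar>z\<bar>"]])
  have "\<bar>z\<bar> ^ k / fact (2 * k + n) \<le> \<bar>z\<bar> ^ k / fact k" for k
    by (intro divide_left_mono fact_mono) auto
  then show "\<exists>N. \<forall>k\<ge>N. norm (z ^ k / fact (2 * k + n)) \<le> inverse (fact k) * \<bar>z\<bar> ^ k"
    by (simp add: power_abs field_simps)
qed

lemma stumpff_sums: "(\<lambda>k. z ^ k / fact (2 * k + n)) sums stumpff n z"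
  unfolding stumpff_def using summable_stumpff by (rule summable_sums)

lemma stumpff_rec: "stumpff n z = 1 / fact n + z * stumpff (n + 2) z"
proof -
  have "(\<lambda>k. z * (z ^ k / fact (2 * k + (n + 2)))) sums (stumpff n z - 1 / fact n)"
    using sums_Suc_iff[of "\<lambda>k. z ^ k / fact (2 * k + n)"] stumpff_sums[of z n]
    by (simp add: algebra_simps)
  moreover have "(\<lambda>k. z * (z ^ k / fact (2 * k + (n + 2)))) sums (z * stumpff (n + 2) z)"
    by (intro sums_mult stumpff_sums)
  ultimately show ?thesis using sums_unique2 by fastforce
qed

lemma has_real_derivative_stumpff:
  "(stumpff n has_real_derivative (stumpff (n + 1) z - n * stumpff (n + 2) z) / 2) (at z)"
proof -
  let ?c = "\<lambda>k. 1 / fact (2 * k + n) :: real"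
  have diffs_c: "diffs ?c k = (1 / fact (2 * k + (n + 1)) - n / fact (2 * k + (n + 2))) / 2" for k
  proof -
    define F :: real where "F = fact (2 * k + (n + 1))"
    define D :: real where "D = 2 * k + n + 2"
    have F: "fact (2 * k + (n + 2)) = D * F" "0 < F"
      unfolding F_def D_def using fact_Suc[of "2 * k + (n + 1)", where 'a=real]
      by (simp_all del: fact_Suc)
    have "0 < D" by (simp add: D_def)
    have "diffs ?c k = Suc k / (D * F)"
      using F(1) by (simp add: diffs_def algebra_simps)
    also have "\<dots> = (2 * Suc k) / (2 * (D * F))"
      by (simp only: mult_divide_mult_cancel_left_if)
    also have "2 * Suc k = D - n" by (simp add: D_def)
    also have "(D - n) / (2 * (D * F)) = (1 / F - n / (D * F)) / 2"
      using \<open>0 < D\<close> F(2) by (simp add: field_simps)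
    finally show ?thesis
      by (simp only: F_def[symmetric] F(1))
  qed
  have "(\<lambda>k. diffs ?c k * z ^ k)
      = (\<lambda>k. (z ^ k / fact (2 * k + (n + 1)) - n * (z ^ k / fact (2 * k + (n + 2)))) / 2)"
    unfolding diffs_c by (simp add: field_simps del: fact_Suc)
  also have "\<dots> sums ((stumpff (n + 1) z - n * stumpff (n + 2) z) / 2)"
    by (intro sums_divide sums_diff sums_mult stumpff_sums)
  finally have "(\<lambda>k. diffs ?c k * z ^ k) sums ((stumpff (n + 1) z - n * stumpff (n + 2) z) / 2)" .
  moreover have "((\<lambda>z. \<Sum>k. ?c k * z ^ k) has_real_derivative (\<Sum>k. diffs ?c k * z ^ k)) (at z)"
    using summable_stumpff by (intro termdiffs_strong_converges_everywhere) simp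
  ultimately show ?thesis
    unfolding stumpff_def by (simp add: sums_unique[symmetric])
qed

lemma isCont_stumpff: "isCont (stumpff n) z"
  using has_real_derivative_stumpff by (rule DERIV_isCont)

definition univ_fun :: "nat \<Rightarrow> real \<Rightarrow> real \<Rightarrow> real" where
  "univ_fun n \<alpha> s = s ^ n * stumpff n (\<alpha> * s\<^sup>2)"

lemma univ_fun_rec: "univ_fun n \<alpha> s = s ^ n / fact n + \<alpha> * univ_fun (n + 2) \<alpha> s"
  unfolding univ_fun_def by (subst stumpff_rec) (simp add: algebra_simps power2_eq_square)

lemma univ_fun_at_0: "univ_fun 0 \<alpha> 0 = 1" "univ_fun (Suc n) \<alpha> 0 = 0"
  unfolding univ_fun_def by (subst stumpff_rec, simp)+

lemma has_real_derivative_stumpff_square: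
  "((\<lambda>s. stumpff n (\<alpha> * s\<^sup>2)) has_real_derivative
     (stumpff (n + 1) (\<alpha> * s\<^sup>2) - n * stumpff (n + 2) (\<alpha> * s\<^sup>2)) * (\<alpha> * s)) (at s)"
proof -
  have "((\<lambda>s. \<alpha> * s\<^sup>2) has_real_derivative \<alpha> * (2 * s)) (at s)"
    by (auto intro!: derivative_eq_intros)
  from DERIV_chain2[OF has_real_derivative_stumpff this] show ?thesis by simp
qed

lemma has_real_derivative_univ_fun_0: "(univ_fun 0 \<alpha> has_real_derivative \<alpha> * univ_fun 1 \<alpha> s) (at s)"
  using has_real_derivative_stumpff_square[of 0 \<alpha> s]
  by (simp add: univ_fun_def[abs_def] algebra_simps)

lemma has_real_derivative_univ_fun_Suc:
  "(univ_fun (Suc n) \<alpha> has_real_derivative univ_fun n \<alpha> s) (at s)"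
proof -
  define z where "z = \<alpha> * s\<^sup>2"
  have "((\<lambda>s. s ^ Suc n * stumpff (Suc n) (\<alpha> * s\<^sup>2)) has_real_derivative
      Suc n * s ^ n * stumpff (Suc n) z
      + s ^ Suc n * ((stumpff (n + 2) z - Suc n * stumpff (n + 3) z) * (\<alpha> * s))) (at s)"
    unfolding z_def using DERIV_mult[OF DERIV_pow[of "Suc n" s] has_real_derivative_stumpff_square[of "Suc n" \<alpha> s]]
    by (simp add: numeral_3_eq_3 mult.commute)
  also have "Suc n * s ^ n * stumpff (Suc n) z
      + s ^ Suc n * ((stumpff (n + 2) z - Suc n * stumpff (n + 3) z) * (\<alpha> * s))
    = s ^ n * (Suc n * stumpff (Suc n) z - Suc n * z * stumpff (n + 3) z + z * stumpff (n + 2) z)"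
    by (simp add: z_def algebra_simps power2_eq_square)
  also have "Suc n * stumpff (Suc n) z - Suc n * z * stumpff (n + 3) z = 1 / fact n"
    using stumpff_rec[of "Suc n" z] by (simp add: algebra_simps numeral_3_eq_3 del: of_nat_Suc)
  also have "1 / fact n + z * stumpff (n + 2) z = stumpff n z"
    by (rule stumpff_rec[symmetric])
  finally show ?thesis by (simp add: univ_fun_def[abs_def] z_def)
qed

lemma has_real_derivative_univ_fun_param:
  "((\<lambda>\<alpha>. univ_fun n \<alpha> s) has_real_derivative
     (s * univ_fun (n + 1) \<alpha> s - n * univ_fun (n + 2) \<alpha> s) / 2) (at \<alpha>)"
proof -
  have "((\<lambda>\<alpha>. \<alpha> * s\<^sup>2) has_real_derivative s\<^sup>2) (at \<alpha>)"
    by (auto intro!: derivative_eq_intros)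
  from DERIV_cmult[OF DERIV_chain2[OF has_real_derivative_stumpff this], of "s ^ n"]
  show ?thesis unfolding univ_fun_def by (simp add: field_simps power2_eq_square)
qed

lemma continuous_on_univ_fun [continuous_intros]:
  "continuous_on S f \<Longrightarrow> continuous_on S g \<Longrightarrow> continuous_on S (\<lambda>z. univ_fun n (f z) (g z))"
  unfolding univ_fun_def
  by (intro continuous_intros continuous_on_compose2[OF continuous_at_imp_continuous_on[OF ballI[OF isCont_stumpff]]]) auto

lemma has_real_derivative_univ_fun_Suc_within:
  "(univ_fun (Suc n) \<alpha> has_real_derivative univ_fun n \<alpha> s) (at s within S)"
  using has_real_derivative_univ_fun_Suc has_field_derivative_at_within by blast

lemmas has_real_derivative_univ_fun_within [derivative_intros] =
  has_real_derivative_univ_fun_0[THEN has_field_derivative_at_within]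
  has_real_derivative_univ_fun_Suc_within[of 0, unfolded One_nat_def[symmetric]]
  has_real_derivative_univ_fun_Suc_within[of 1, unfolded Suc_1]
  has_real_derivative_univ_fun_Suc_within[of 2, simplified]
  has_real_derivative_univ_fun_Suc_within[of 3, simplified]
  has_real_derivative_univ_fun_Suc_within[of 4, simplified]

lemma univ_fun_rec_numeral:
  "univ_fun 0 \<alpha> s = 1 + \<alpha> * univ_fun 2 \<alpha> s"
  "univ_fun 1 \<alpha> s = s + \<alpha> * univ_fun 3 \<alpha> s"
  "univ_fun 2 \<alpha> s = s\<^sup>2 / 2 + \<alpha> * univ_fun 4 \<alpha> s"
  "univ_fun 3 \<alpha> s = s ^ 3 / 6 + \<alpha> * univ_fun 5 \<alpha> s"
  using univ_fun_rec[of 0] univ_fun_rec[of 1] univ_fun_rec[of 2] univ_fun_rec[of 3]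
  by (simp_all only: numeral_2_eq_2 numeral_3_eq_3) (simp_all add: eval_nat_numeral)

lemma univ_fun_at_0_numeral:
  "univ_fun 0 \<alpha> 0 = 1" "univ_fun 1 \<alpha> 0 = 0" "univ_fun 2 \<alpha> 0 = 0"
  "univ_fun 3 \<alpha> 0 = 0" "univ_fun 4 \<alpha> 0 = 0" "univ_fun 5 \<alpha> 0 = 0"
  using univ_fun_at_0 by (simp_all add: univ_fun_def)

lemma has_real_derivative_univ_fun_param_chain [derivative_intros]:
  "(g has_real_derivative g') (at x within S) \<Longrightarrow>
   ((\<lambda>x. univ_fun n (g x) s) has_real_derivative
      (s * univ_fun (n + 1) (g x) s - n * univ_fun (n + 2) (g x) s) / 2 * g') (at x within S)"
  by (rule DERIV_chain2[OF has_real_derivative_univ_fun_param])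

lemma has_real_derivative_const_on_interval:
  assumes "(f has_real_derivative f') (at w)" and "\<And>y. y \<in> {u<..<v} \<Longrightarrow> f y = c"
    and "w \<in> {u<..<v}"
  shows "f' = 0"
proof (rule DERIV_local_const[OF assms(1)])
  show "0 < min (w - u) (v - w)" using assms(3) by simp
  show "\<forall>y. \<bar>w - y\<bar> < min (w - u) (v - w) \<longrightarrow> f w = f y"
    using assms(2,3) by (auto simp: abs_less_iff)
qed

lemma DERIV_within_nonneg_imp_nondecreasing:
  fixes f :: "real \<Rightarrow> real"
  assumes deriv: "\<And>t. t \<in> {a..b} \<Longrightarrow> (f has_real_derivative f' t) (at t within {a..b})"
    and nonneg: "\<And>t. t \<in> {a..b} \<Longrightarrow> 0 \<le> f' t" and "a \<le> c" "c \<le> d" "d \<le> b"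
  shows "f c \<le> f d"
proof (rule DERIV_nonneg_imp_increasing_open[OF \<open>c \<le> d\<close>])
  fix x assume x: "c < x" "x < d"
  then have "at x within {a..b} = at x" using assms by (intro at_within_Icc_at) auto
  then show "\<exists>y. DERIV f x :> y \<and> 0 \<le> y" using deriv[of x] nonneg[of x] x assms by auto
next
  show "continuous_on {c..d} f"
    using continuous_on_subset[OF DERIV_continuous_on[OF deriv]] assms by auto
qed

lemma DERIV_within_pos_imp_increasing:
  fixes f :: "real \<Rightarrow> real"
  assumes deriv: "\<And>t. t \<in> {a..b} \<Longrightarrow> (f has_real_derivative f' t) (at t within {a..b})"
    and pos: "\<And>t. t \<in> {a..b} \<Longrightarrow> 0 < f' t" and "a \<le> c" "c < d" "d \<le> b"
  shows "f c < f d"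
proof (rule DERIV_pos_imp_increasing_open[OF \<open>c < d\<close>])
  fix x assume x: "c < x" "x < d"
  then have "at x within {a..b} = at x" using assms by (intro at_within_Icc_at) auto
  then show "\<exists>y. DERIV f x :> y \<and> 0 < y" using deriv[of x] pos[of x] x assms by auto
next
  show "continuous_on {c..d} f"
    using continuous_on_subset[OF DERIV_continuous_on[OF deriv]] assms by auto
qed

lemma MVT_between:
  fixes f f' :: "real \<Rightarrow> real"
  assumes "\<And>y. (f has_real_derivative f' y) (at y)"
  shows "\<exists>\<xi>. \<bar>\<xi> - x\<bar> \<le> \<bar>y - x\<bar> \<and> f y - f x = (y - x) * f' \<xi>"
proof (cases x y rule: linorder_cases)
  case less
  then obtain z where "x < z" "z < y" "f y - f x = (y - x) * f' z" using MVT2[OF _ assms] by blast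
  then show ?thesis by (intro exI[of _ z]) auto
next
  case greater
  then obtain z where "y < z" "z < x" "f x - f y = (x - y) * f' z" using MVT2[OF _ assms] by blast
  then show ?thesis by (intro exI[of _ z]) (auto simp: algebra_simps)
qed auto

lemma tendsto_abs_bounded:
  fixes g f :: "'b \<Rightarrow> real"
  assumes "\<And>a. \<bar>g a - c\<bar> \<le> \<bar>f a - d\<bar>" "(f \<longlongrightarrow> d) F"
  shows "(g \<longlongrightarrow> c) F"
proof -
  have "((\<lambda>a. norm (f a - d)) \<longlongrightarrow> 0) F" using assms(2) by (intro tendsto_norm_zero) (simp add: LIM_zero)
  then have "((\<lambda>a. g a - c) \<longlongrightarrow> 0) F"
    by (rule Lim_null_comparison[rotated]) (use assms(1) in auto)
  then show ?thesis by (rule LIM_zero_cancel)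
qed

lemma MVT_two_variables:
  fixes G Ga Gs :: "real \<Rightarrow> real \<Rightarrow> real" and h :: "real \<Rightarrow> real"
  assumes Ga: "\<And>a s. ((\<lambda>a. G a s) has_real_derivative Ga a s) (at a)"
    and Gs: "\<And>a s. (G a has_real_derivative Gs a s) (at s)"
    and h: "(h \<longlongrightarrow> h a0) (at a0)"
  obtains \<xi> \<eta> where "(\<xi> \<longlongrightarrow> a0) (at a0)" "(\<eta> \<longlongrightarrow> h a0) (at a0)"
    "\<And>a. G a (h a) - G a0 (h a0) = (a - a0) * Ga (\<xi> a) (h a) + (h a - h a0) * Gs a0 (\<eta> a)"
proof -
  have "\<forall>a. \<exists>\<xi>. \<bar>\<xi> - a0\<bar> \<le> \<bar>a - a0\<bar> \<and> G a (h a) - G a0 (h a) = (a - a0) * Ga \<xi> (h a)"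
    using MVT_between[OF Ga] by blast
  then obtain \<xi> where \<xi>: "\<And>a. \<bar>\<xi> a - a0\<bar> \<le> \<bar>a - a0\<bar>"
    "\<And>a. G a (h a) - G a0 (h a) = (a - a0) * Ga (\<xi> a) (h a)" by metis
  have "\<forall>a. \<exists>\<eta>. \<bar>\<eta> - h a0\<bar> \<le> \<bar>h a - h a0\<bar> \<and> G a0 (h a) - G a0 (h a0) = (h a - h a0) * Gs a0 \<eta>"
    using MVT_between[OF Gs] by blast
  then obtain \<eta> where \<eta>: "\<And>a. \<bar>\<eta> a - h a0\<bar> \<le> \<bar>h a - h a0\<bar>"
    "\<And>a. G a0 (h a) - G a0 (h a0) = (h a - h a0) * Gs a0 (\<eta> a)" by metis
  show ?thesis
  proof
    show "(\<xi> \<longlongrightarrow> a0) (at a0)" by (rule tendsto_abs_bounded[OF \<xi>(1) tendsto_ident_at])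
    show "(\<eta> \<longlongrightarrow> h a0) (at a0)" by (rule tendsto_abs_bounded[OF \<eta>(1) h])
    show "G a (h a) - G a0 (h a0) = (a - a0) * Ga (\<xi> a) (h a) + (h a - h a0) * Gs a0 (\<eta> a)" for a
      using \<xi>(2)[of a] \<eta>(2)[of a] by simp
  qed
qed

lemma scaled_cross_term_le:
  fixes u w g K :: real
  assumes "0 \<le> g" "1 + g \<le> K"
  shows "2 * u * w * (1 + g) \<le> K * (u\<^sup>2 + w\<^sup>2)"
proof (cases "0 \<le> u * w")
  case True
  have "2 * u * w \<le> u\<^sup>2 + w\<^sup>2"
    using sum_squares_ge_zero[of "u - w" 0] by (simp add: power2_eq_square algebra_simps)
  then have "2 * u * w * (1 + g) \<le> (u\<^sup>2 + w\<^sup>2) * (1 + g)"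
    using assms(1) by (intro mult_right_mono) auto
  also have "\<dots> \<le> (u\<^sup>2 + w\<^sup>2) * K" using assms(2) by (intro mult_left_mono) auto
  finally show ?thesis by (simp add: mult.commute)
next
  case False
  then have "2 * u * w * (1 + g) \<le> 0" using assms(1) by (simp add: mult_nonpos_nonneg)
  moreover have "0 \<le> K * (u\<^sup>2 + w\<^sup>2)" using assms by simp
  ultimately show ?thesis by linarith
qed

lemma cooperative_system_pos:
  fixes J K X Y :: "real \<Rightarrow> real"
  assumes "0 < s0"
    and dJ: "\<And>s. 0 \<le> s \<Longrightarrow> s \<le> s0 \<Longrightarrow> (J has_real_derivative X s * K s) (at s)"
    and dK: "\<And>s. 0 \<le> s \<Longrightarrow> s \<le> s0 \<Longrightarrow> (K has_real_derivative Y s * J s) (at s)"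
    and X: "\<And>s. 0 \<le> s \<Longrightarrow> s \<le> s0 \<Longrightarrow> 0 < X s"
    and Y: "\<And>s. 0 \<le> s \<Longrightarrow> s \<le> s0 \<Longrightarrow> 0 \<le> Y s"
    and init: "J 0 = 0" "K 0 = 1"
  shows "0 < J s0"
proof -
  have JK: "0 \<le> J s * K s" if "0 \<le> s" "s \<le> s0" for s
  proof -
    have "J 0 * K 0 \<le> J s * K s"
    proof (rule DERIV_nonneg_imp_nondecreasing[OF that(1)])
      fix u assume "0 \<le> u" "u \<le> s"
      with that have u: "0 \<le> u" "u \<le> s0" by auto
      have "0 \<le> X u * (K u * K u)" "0 \<le> Y u * (J u * J u)"
        using X[OF u] Y[OF u] by simp_all
      then have "0 \<le> X u * K u * K u + Y u * J u * J u"
        by (simp only: mult.assoc add_nonneg_nonneg)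
      with DERIV_mult[OF dJ[OF u] dK[OF u]]
      show "\<exists>y. ((\<lambda>s. J s * K s) has_real_derivative y) (at u) \<and> 0 \<le> y" by (intro exI conjI)
    qed
    then show ?thesis using init by simp
  qed
  have KK: "1 \<le> K s * K s" if "0 \<le> s" "s \<le> s0" for s
  proof -
    have "K 0 * K 0 \<le> K s * K s"
    proof (rule DERIV_nonneg_imp_nondecreasing[OF that(1)])
      fix u assume "0 \<le> u" "u \<le> s"
      with that have u: "0 \<le> u" "u \<le> s0" by auto
      have "0 \<le> Y u * (J u * K u)" using Y[OF u] JK[OF u] by simp
      then have "0 \<le> Y u * J u * K u + Y u * J u * K u"
        by (simp only: mult.assoc add_nonneg_nonneg)
      with DERIV_mult[OF dK[OF u] dK[OF u]]
      show "\<exists>y. ((\<lambda>s. K s * K s) has_real_derivative y) (at u) \<and> 0 \<le> y" by (intro exI conjI)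
    qed
    then show ?thesis using init by simp
  qed
  have K_pos: "0 < K s" if s: "0 \<le> s" "s \<le> s0" for s
  proof (rule ccontr)
    assume "\<not> 0 < K s"
    moreover have "\<forall>u. 0 \<le> u \<and> u \<le> s \<longrightarrow> isCont K u"
      using s by (auto intro: DERIV_isCont[OF dK])
    ultimately obtain u where "0 \<le> u" "u \<le> s" "K u = 0"
      using IVT2[of K s 0 0] s init by auto
    then show False using KK[of u] s by simp
  qed
  have "J 0 < J s0"
  proof (rule DERIV_pos_imp_increasing[OF \<open>0 < s0\<close>])
    fix u assume u: "0 \<le> u" "u \<le> s0"
    show "\<exists>y. (J has_real_derivative y) (at u) \<and> 0 < y"
      using dJ[OF u] X[OF u] K_pos[OF u] by (intro exI[of _ "X u * K u"]) simp
  qed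
  then show ?thesis using init by simp
qed

section \<open>Rectilinear solutions\<close>

lemma line_solD:
  assumes "line_sol x v a b" "t \<in> {a..b}"
  shows "0 < x t" "(x has_real_derivative v t) (at t within {a..b})"
    "(v has_real_derivative - 1 / (x t)\<^sup>2) (at t within {a..b})"
  using assms unfolding line_sol_def by auto

lemma line_sol_le: "line_sol x v a b \<Longrightarrow> a \<le> b"
  unfolding line_sol_def by simp

lemma line_sol_continuous_on:
  assumes "line_sol x v a b"
  shows "continuous_on {a..b} x" "continuous_on {a..b} v"
  by (rule DERIV_continuous_on, erule line_solD[OF assms])+

lemma line_sol_restrict:
  assumes "line_sol x v a b" "a \<le> c" "c \<le> b"
  shows "line_sol x v a c"
  using assms unfolding line_sol_def by (auto intro: has_field_derivative_subset[where s="{a..b}"])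

lemma line_sol_shift:
  assumes "line_sol x v a b"
  shows "line_sol (\<lambda>t. x (t + a)) (\<lambda>t. v (t + a)) 0 (b - a)"
  unfolding line_sol_def
proof (intro conjI ballI)
  show "0 \<le> b - a" using line_sol_le[OF assms] by simp
  fix t assume t: "t \<in> {0..b - a}"
  then have ta: "t + a \<in> {a..b}" by auto
  have img: "(\<lambda>t. t + a) ` {0..b - a} = {a..b}" by simp
  have shift: "((\<lambda>t. t + a) has_real_derivative 1) (at t within {0..b - a})"
    by (auto intro!: derivative_eq_intros)
  show "0 < x (t + a)" using line_solD(1)[OF assms ta] .
  show "((\<lambda>t. x (t + a)) has_real_derivative v (t + a)) (at t within {0..b - a})"
    using DERIV_image_chain[OF _ shift] line_solD(2)[OF assms ta] by (simp add: img o_def)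
  show "((\<lambda>t. v (t + a)) has_real_derivative - 1 / (x (t + a))\<^sup>2) (at t within {0..b - a})"
    using DERIV_image_chain[OF _ shift] line_solD(3)[OF assms ta] by (simp add: img o_def)
qed

lemma line_sol_energy:
  assumes "line_sol x v a b" "t \<in> {a..b}"
  shows "(v t)\<^sup>2 - 2 / x t = (v a)\<^sup>2 - 2 / x a"
proof -
  have "((\<lambda>t. (v t)\<^sup>2 - 2 / x t) has_real_derivative 0) (at s within {a..b})" if s: "s \<in> {a..b}" for s
    using line_solD[OF assms(1) s]
    by (auto intro!: derivative_eq_intros simp: field_simps power2_eq_square)
  then obtain c where "\<forall>s\<in>{a..b}. (v s)\<^sup>2 - 2 / x s = c"
    using has_field_derivative_zero_constant[of "{a..b}"] by blast
  then show ?thesis using assms(2) line_sol_le[OF assms(1)] by auto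
qed

lemma line_sol_velocity_antimono:
  assumes "line_sol x v a b" "a \<le> c" "c \<le> d" "d \<le> b"
  shows "v d \<le> v c"
proof -
  have "- v c \<le> - v d"
  proof (rule DERIV_within_nonneg_imp_nondecreasing[where f="\<lambda>t. - v t" and f'="\<lambda>t. 1 / (x t)\<^sup>2"])
    fix t assume t: "t \<in> {a..b}"
    show "((\<lambda>t. - v t) has_real_derivative 1 / (x t)\<^sup>2) (at t within {a..b})"
      using DERIV_minus[OF line_solD(3)[OF assms(1) t]] by simp
  qed (use assms in auto)
  then show ?thesis by simp
qed

lemma line_sol_le_linear:
  assumes "line_sol x v a b" "t \<in> {a..b}"
  shows "x t - x a \<le> v a * (t - a)"
proof -
  have "v a * a - x a \<le> v a * t - x t"
  proof (rule DERIV_within_nonneg_imp_nondecreasing[where f="\<lambda>t. v a * t - x t" and f'="\<lambda>t. v a - v t"])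
    fix s assume s: "s \<in> {a..b}"
    show "((\<lambda>t. v a * t - x t) has_real_derivative v a - v s) (at s within {a..b})"
      using line_solD(2)[OF assms(1) s] by (auto intro!: derivative_eq_intros)
    show "0 \<le> v a - v s" using line_sol_velocity_antimono[OF assms(1), of a s] s by simp
  qed (use assms in auto)
  then show ?thesis by (simp add: algebra_simps)
qed

lemma line_sol_unique:
  assumes sol1: "line_sol x1 v1 a b" and sol2: "line_sol x2 v2 a b"
    and init: "x1 a = x2 a" "v1 a = v2 a" and t: "t \<in> {a..b}"
  shows "x1 t = x2 t \<and> v1 t = v2 t"
proof -
  note D1 = line_solD[OF sol1] and D2 = line_solD[OF sol2]
  define g where "g s = (x1 s + x2 s) / ((x1 s)\<^sup>2 * (x2 s)\<^sup>2)" for s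
  have g_nonneg: "0 \<le> g s" if "s \<in> {a..b}" for s
    using D1(1)[OF that] D2(1)[OF that] by (simp add: g_def)
  have nz: "\<forall>s\<in>{a..b}. (x1 s)\<^sup>2 * (x2 s)\<^sup>2 \<noteq> 0" using D1(1) D2(1) by fastforce
  have "continuous_on {a..b} g"
    unfolding g_def using line_sol_continuous_on(1)[OF sol1] line_sol_continuous_on(1)[OF sol2]
    by (intro continuous_on_divide continuous_on_add continuous_on_mult continuous_on_power nz)
  then obtain s0 where s0: "\<forall>s\<in>{a..b}. g s \<le> g s0"
    using continuous_attains_sup[OF compact_Icc _ \<open>continuous_on {a..b} g\<close>] t by auto
  define K where "K = 1 + max 0 (g s0)"
  have K: "1 + g s \<le> K" if "s \<in> {a..b}" for s
    using s0 that by (fastforce simp: K_def)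
  have "0 \<le> K" by (simp add: K_def)
  text \<open>Gronwall: the squared distance of the two states, damped by \<open>exp (- K s)\<close>, cannot increase.\<close>
  define \<phi> where "\<phi> s = (x1 s - x2 s)\<^sup>2 + (v1 s - v2 s)\<^sup>2" for s
  define \<phi>' where "\<phi>' s = 2 * (x1 s - x2 s) * (v1 s - v2 s)
      + 2 * (v1 s - v2 s) * (- 1 / (x1 s)\<^sup>2 - - 1 / (x2 s)\<^sup>2)" for s
  have deriv: "((\<lambda>s. - (\<phi> s * exp (- K * s))) has_real_derivative (K * \<phi> s - \<phi>' s) * exp (- K * s))
      (at s within {a..b})" if s: "s \<in> {a..b}" for s
    unfolding \<phi>_def \<phi>'_def using D1[OF s] D2[OF s]
    by (auto intro!: derivative_eq_intros simp: field_simps)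
  moreover have decay: "\<phi>' s \<le> K * \<phi> s" if s: "s \<in> {a..b}" for s
  proof -
    have force_diff: "- 1 / (x1 s)\<^sup>2 - - 1 / (x2 s)\<^sup>2 = (x1 s - x2 s) * g s"
      using D1(1)[OF s] D2(1)[OF s] by (simp add: g_def field_simps power2_eq_square)
    have "\<phi>' s = 2 * (x1 s - x2 s) * (v1 s - v2 s) * (1 + g s)"
      unfolding \<phi>'_def force_diff by (simp add: algebra_simps)
    then show ?thesis
      unfolding \<phi>_def
      using scaled_cross_term_le[OF g_nonneg[OF s] K[OF s], of "x1 s - x2 s" "v1 s - v2 s"] by simp
  qed
  have "- (\<phi> a * exp (- K * a)) \<le> - (\<phi> t * exp (- K * t))"
    by (rule DERIV_within_nonneg_imp_nondecreasing[OF deriv]) (use t decay in auto)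
  then have "\<phi> t \<le> 0" using init by (simp add: \<phi>_def mult_le_0_iff)
  then show ?thesis by (simp add: \<phi>_def sum_power2_le_zero_iff)
qed

lemma line_sol_decreasing:
  assumes sol: "line_sol x v a b" and "a \<le> t1" "v t1 < 0" "t1 < t2" "t2 \<le> b"
  shows "x t2 < x t1"
proof -
  have "- x t1 < - x t2"
  proof (rule DERIV_within_pos_imp_increasing[where f="\<lambda>t. - x t" and f'="\<lambda>t. - v t" and a=t1 and b=b])
    fix s assume s: "s \<in> {t1..b}"
    then have "(x has_real_derivative v s) (at s within {t1..b})"
      using line_solD(2)[OF sol, of s] assms by (auto intro: has_field_derivative_subset)
    then show "((\<lambda>t. - x t) has_real_derivative - v s) (at s within {t1..b})"
      by (rule DERIV_minus)
    show "0 < - v s" using line_sol_velocity_antimono[OF sol, of t1 s] s assms by simp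
  qed (use assms in auto)
  then show ?thesis by simp
qed

lemma line_sol_above_escape_nondecreasing:
  assumes sol: "line_sol x v a b" and "0 < v a" and "2 / x a \<le> (v a)\<^sup>2"
  shows "x a \<le> x b"
proof -
  have v_ne: "v s \<noteq> 0" if s: "s \<in> {a..b}" for s
  proof -
    have "0 < 2 / x s" using line_solD(1)[OF sol s] by simp
    moreover have "(v s)\<^sup>2 - 2 / x s = (v a)\<^sup>2 - 2 / x a" by (rule line_sol_energy[OF sol s])
    ultimately have "0 < (v s)\<^sup>2" using assms(3) by linarith
    then show ?thesis by auto
  qed
  have v_pos: "0 < v s" if s: "s \<in> {a..b}" for s
  proof (rule ccontr)
    assume "\<not> 0 < v s"
    moreover have "continuous_on {a..s} v"
      using continuous_on_subset[OF line_sol_continuous_on(2)[OF sol]] s by auto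
    ultimately obtain u where "a \<le> u" "u \<le> s" "v u = 0"
      using IVT2'[of v s 0 a] \<open>0 < v a\<close> s by force
    then show False using v_ne[of u] s by auto
  qed
  show ?thesis
    by (rule DERIV_within_nonneg_imp_nondecreasing[OF line_solD(2)[OF sol]])
      (use v_pos line_sol_le[OF sol] in \<open>auto intro: less_imp_le\<close>)
qed

section \<open>Direct Keplerian arcs between two points of a ray\<close>

lemma has_real_derivative_inner_const:
  assumes "(f has_vector_derivative f') F"
  shows "((\<lambda>t. inner (f t) c) has_real_derivative inner f' c) F"
proof -
  have "((\<lambda>t. inner (f t) c) has_derivative (\<lambda>h. inner (h *\<^sub>R f') c)) F"
    using bounded_linear.has_derivative[OF bounded_linear_inner_left assms[unfolded has_vector_derivative_def]] .
  moreover have "(\<lambda>h. inner (h *\<^sub>R f') c) = (*) (inner f' c)" by (rule ext) simp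
  ultimately show ?thesis by (simp add: has_field_derivative_def)
qed

lemma eq_inner_scaleR_if_orthogonal:
  fixes y e :: "'a::real_inner"
  assumes "norm e = 1" "\<And>c. inner e c = 0 \<Longrightarrow> inner y c = 0"
  shows "y = inner y e *\<^sub>R e"
proof -
  define c where "c = y - inner y e *\<^sub>R e"
  have "inner e e = 1" using assms(1) by (simp add: dot_square_norm)
  then have "inner e c = 0" by (simp add: c_def inner_diff_right inner_commute)
  then have "inner c c = 0"
    using assms(2)[of c] by (simp add: c_def inner_diff_left)
  then show ?thesis by (simp add: c_def)
qed

lemma kepler_solD:
  assumes "kepler_sol q p a b" "t \<in> {a..b}"
  shows "q t \<noteq> 0" "(q has_vector_derivative p t) (at t within {a..b})"
    "(p has_vector_derivative (- (1 / norm (q t) ^ 3)) *\<^sub>R q t) (at t within {a..b})"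
  using assms unfolding kepler_sol_def by auto

lemma kepler_sol_orthogonal_to_ray:
  fixes q p :: "real \<Rightarrow> 'a::euclidean_space"
  assumes sol: "kepler_sol q p a b" and "a < b"
    and ends: "q a = xa *\<^sub>R e" "q b = xb *\<^sub>R e" and "inner e c = 0"
    and half: "\<And>t. t \<in> {a..b} \<Longrightarrow> 0 < inner (q t) w"
    and t: "t \<in> {a..b}"
  shows "inner (q t) c = 0 \<and> inner (p t) c = 0"
proof -
  define f where "f = (\<lambda>t. inner (q t) c / inner (q t) w)"
  define N where "N t = inner (p t) c * inner (q t) w - inner (q t) c * inner (p t) w" for t
  have dq: "((\<lambda>t. inner (q t) d) has_real_derivative inner (p s) d) (at s within {a..b})"
    and dp: "((\<lambda>t. inner (p t) d) has_real_derivative - (1 / norm (q s) ^ 3) * inner (q s) d)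
      (at s within {a..b})" if "s \<in> {a..b}" for s d
    using has_real_derivative_inner_const[OF kepler_solD(2)[OF sol that]]
      has_real_derivative_inner_const[OF kepler_solD(3)[OF sol that]] by simp_all
  text \<open>The force is central, so this angular momentum is conserved.\<close>
  have "(N has_real_derivative 0) (at s within {a..b})" if "s \<in> {a..b}" for s
    unfolding N_def
    by (rule DERIV_cong, (rule derivative_intros dq[OF that] dp[OF that])+) (simp add: algebra_simps)
  then obtain N0 where N0: "\<And>s. s \<in> {a..b} \<Longrightarrow> N s = N0"
    using has_field_derivative_zero_constant[of "{a..b}" N] by auto
  have df: "(f has_real_derivative N0 / (inner (q s) w)\<^sup>2) (at s within {a..b})" if s: "s \<in> {a..b}" for s
  proof -
    have "inner (q s) w \<noteq> 0" using half[OF s] by simp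
    from DERIV_divide[OF dq[OF s, of c] dq[OF s, of w] this] N0[OF s] show ?thesis
      by (simp add: f_def N_def power2_eq_square)
  qed
  have "f a = 0" "f b = 0" using \<open>inner e c = 0\<close> by (simp_all add: f_def ends inner_commute)
  have "N0 = 0"
  proof (rule ccontr)
    assume "N0 \<noteq> 0"
    have "N0 * f a < N0 * f b"
    proof (rule DERIV_within_pos_imp_increasing[where f="\<lambda>t. N0 * f t"
        and f'="\<lambda>s. N0\<^sup>2 / (inner (q s) w)\<^sup>2"])
      fix s assume s: "s \<in> {a..b}"
      show "((\<lambda>t. N0 * f t) has_real_derivative N0\<^sup>2 / (inner (q s) w)\<^sup>2) (at s within {a..b})"
        using DERIV_cmult[OF df[OF s], of N0] by (simp add: power2_eq_square)
      show "0 < N0\<^sup>2 / (inner (q s) w)\<^sup>2" using \<open>N0 \<noteq> 0\<close> half[OF s] by simp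
    qed (use \<open>a < b\<close> in auto)
    then show False using \<open>f a = 0\<close> \<open>f b = 0\<close> by simp
  qed
  then obtain f0 where "\<And>s. s \<in> {a..b} \<Longrightarrow> f s = f0"
    using has_field_derivative_zero_constant[of "{a..b}" f] df by auto
  then have "f t = 0" using \<open>f a = 0\<close> \<open>a < b\<close> t by force
  then have "inner (q t) c = 0" using half[OF t] by (simp add: f_def)
  moreover have "N t = 0" using N0[OF t] \<open>N0 = 0\<close> by simp
  ultimately show ?thesis using half[OF t] by (simp add: N_def)
qed

lemma direct_kepler_arc_on_ray:
  fixes q p :: "real \<Rightarrow> 'a::euclidean_space"
  assumes e: "norm e = 1" and "tA < tB" and sol: "kepler_sol q p tA tB"
    and ends: "q tA = xA *\<^sub>R e" "q tB = xB *\<^sub>R e" "0 < xA" and direct: "direct_arc q tA tB"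
  shows "line_sol (\<lambda>t. inner (q t) e) (\<lambda>t. inner (p t) e) tA tB"
    "\<And>t. t \<in> {tA..tB} \<Longrightarrow> q t = inner (q t) e *\<^sub>R e \<and> p t = inner (p t) e *\<^sub>R e"
proof -
  let ?H = "convex hull (q ` {tA..tB})"
  define x where "x = (\<lambda>t. inner (q t) e)"
  have q_cont: "continuous_on {tA..tB} q"
    unfolding continuous_on_eq_continuous_within
    using kepler_solD(2)[OF sol] has_vector_derivative_continuous by blast
  then have "closed ?H" by (intro compact_imp_closed compact_convex_hull compact_continuous_image compact_Icc)
  then obtain w b where "0 < b" "\<forall>y\<in>?H. b < inner w y"
    using separating_hyperplane_closed_0[OF convex_convex_hull] direct unfolding direct_arc_def by blast
  moreover have "q t \<in> ?H" if "t \<in> {tA..tB}" for t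
    using that by (intro hull_inc) auto
  ultimately have half: "0 < inner (q t) w" if "t \<in> {tA..tB}" for t
    using that by (fastforce simp: inner_commute)
  show on_ray: "q t = inner (q t) e *\<^sub>R e \<and> p t = inner (p t) e *\<^sub>R e" if t: "t \<in> {tA..tB}" for t
    using kepler_sol_orthogonal_to_ray[OF sol \<open>tA < tB\<close> ends(1,2) _ half t]
    by (auto intro: eq_inner_scaleR_if_orthogonal[OF e])
  then have q_eq: "q t = x t *\<^sub>R e" if "t \<in> {tA..tB}" for t
    using that by (simp add: x_def)
  have "inner e e = 1" using e by (simp add: dot_square_norm)
  then have "x tA = xA" by (simp add: x_def ends)
  have x_pos: "0 < x t" if t: "t \<in> {tA..tB}" for t
  proof (rule ccontr)
    assume "\<not> 0 < x t"
    moreover have "continuous_on {tA..t} x"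
      using continuous_on_subset[OF q_cont] t unfolding x_def by (auto intro: continuous_intros)
    ultimately obtain u where "tA \<le> u" "u \<le> t" "x u = 0"
      using IVT2'[of x t 0 tA] \<open>x tA = xA\<close> \<open>0 < xA\<close> t by auto
    then show False using kepler_solD(1)[OF sol, of u] q_eq[of u] t by auto
  qed
  show "line_sol (\<lambda>t. inner (q t) e) (\<lambda>t. inner (p t) e) tA tB"
    unfolding line_sol_def x_def[symmetric]
  proof (intro conjI ballI)
    fix t assume t: "t \<in> {tA..tB}"
    have "norm (q t) = x t" using q_eq[OF t] x_pos[OF t] e by simp
    then have "inner ((- (1 / norm (q t) ^ 3)) *\<^sub>R q t) e = - 1 / (x t)\<^sup>2"
      using x_pos[OF t] by (simp add: x_def power2_eq_square power3_eq_cube)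
    with has_real_derivative_inner_const[OF kepler_solD(3)[OF sol t], of e]
    show "((\<lambda>t. inner (p t) e) has_real_derivative - 1 / (x t)\<^sup>2) (at t within {tA..tB})"
      by simp
    show "(x has_real_derivative inner (p t) e) (at t within {tA..tB})"
      unfolding x_def using has_real_derivative_inner_const[OF kepler_solD(2)[OF sol t]] .
  qed (use x_pos \<open>tA < tB\<close> in auto)
qed

lemma line_sol_imp_direct_kepler_arc:
  fixes q p :: "real \<Rightarrow> 'a::euclidean_space"
  assumes e: "norm e = 1" and sol: "line_sol x v tA tB"
    and qp: "\<And>t. t \<in> {tA..tB} \<Longrightarrow> q t = x t *\<^sub>R e \<and> p t = v t *\<^sub>R e"
  shows "kepler_sol q p tA tB" "direct_arc q tA tB"
proof -
  show "kepler_sol q p tA tB"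
    unfolding kepler_sol_def
  proof (intro conjI ballI)
    show "tA \<le> tB" by (rule line_sol_le[OF sol])
    fix t assume t: "t \<in> {tA..tB}"
    note D = line_solD[OF sol t]
    show "q t \<noteq> 0" using qp[OF t] D(1) e by auto
    have "((\<lambda>t. x t *\<^sub>R e) has_vector_derivative v t *\<^sub>R e) (at t within {tA..tB})"
      using has_vector_derivative_scaleR[OF D(2) has_vector_derivative_const] by simp
    then show "(q has_vector_derivative p t) (at t within {tA..tB})"
      using has_vector_derivative_transform[OF t, of q] qp t by auto
    have "((\<lambda>t. v t *\<^sub>R e) has_vector_derivative (- 1 / (x t)\<^sup>2) *\<^sub>R e) (at t within {tA..tB})"
      using has_vector_derivative_scaleR[OF D(3) has_vector_derivative_const] by simp
    moreover have "(- 1 / (x t)\<^sup>2) *\<^sub>R e = (- (1 / norm (q t) ^ 3)) *\<^sub>R q t"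
      using qp[OF t] D(1) e by (simp add: power2_eq_square power3_eq_cube)
    ultimately show "(p has_vector_derivative (- (1 / norm (q t) ^ 3)) *\<^sub>R q t) (at t within {tA..tB})"
      using has_vector_derivative_transform[OF t, of p] qp t by auto
  qed
  have "convex hull (q ` {tA..tB}) \<subseteq> {y. 0 < inner e y}"
    using qp line_solD(1)[OF sol] e
    by (intro hull_minimal convex_halfspace_gt) (auto simp: dot_square_norm)
  then show "direct_arc q tA tB" unfolding direct_arc_def by auto
qed

section \<open>The regularised rectilinear solution\<close>

text \<open>\<open>radius a s\<close> and \<open>clock a s\<close> are the position and the physical time at fictitious time \<open>s\<close>
  of the motion launched from \<open>xA\<close> with velocity \<open>a\<close>; \<open>radius_ds\<close> is the \<open>s\<close>-derivative of the
  radius, and \<open>radius_da\<close>, \<open>radius_dads\<close>, \<open>clock_da\<close> are derivatives in \<open>a\<close>.\<close>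
locale radial_launch =
  fixes xA :: real
  assumes xA_pos: "0 < xA"
begin

definition alpha :: "real \<Rightarrow> real" where
  "alpha a = a\<^sup>2 - 2 / xA"

definition escape_speed :: real where
  "escape_speed = sqrt (2 / xA)"

definition radius :: "real \<Rightarrow> real \<Rightarrow> real" where
  "radius a s = xA * univ_fun 0 (alpha a) s + xA * a * univ_fun 1 (alpha a) s + univ_fun 2 (alpha a) s"

definition radius_ds :: "real \<Rightarrow> real \<Rightarrow> real" where
  "radius_ds a s = xA * alpha a * univ_fun 1 (alpha a) s + xA * a * univ_fun 0 (alpha a) s
     + univ_fun 1 (alpha a) s"

definition clock :: "real \<Rightarrow> real \<Rightarrow> real" where
  "clock a s = xA * univ_fun 1 (alpha a) s + xA * a * univ_fun 2 (alpha a) s + univ_fun 3 (alpha a) s"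

definition radius_da :: "real \<Rightarrow> real \<Rightarrow> real" where
  "radius_da a s = xA * a * s * univ_fun 1 (alpha a) s + xA * univ_fun 1 (alpha a) s
     + xA * a\<^sup>2 * (s * univ_fun 2 (alpha a) s - univ_fun 3 (alpha a) s)
     + a * (s * univ_fun 3 (alpha a) s - 2 * univ_fun 4 (alpha a) s)"

definition radius_dads :: "real \<Rightarrow> real \<Rightarrow> real" where
  "radius_dads a s = xA * a * univ_fun 1 (alpha a) s + xA * a * s * univ_fun 0 (alpha a) s
     + xA * univ_fun 0 (alpha a) s + xA * a\<^sup>2 * s * univ_fun 1 (alpha a) s
     + a * (s * univ_fun 2 (alpha a) s - univ_fun 3 (alpha a) s)"

definition clock_da :: "real \<Rightarrow> real \<Rightarrow> real" where
  "clock_da a s = xA * a * (s * univ_fun 2 (alpha a) s - univ_fun 3 (alpha a) s)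
     + xA * univ_fun 2 (alpha a) s
     + xA * a\<^sup>2 * (s * univ_fun 3 (alpha a) s - 2 * univ_fun 4 (alpha a) s)
     + a * (s * univ_fun 4 (alpha a) s - 3 * univ_fun 5 (alpha a) s)"

lemma has_real_derivative_radius:
  "(radius a has_real_derivative radius_ds a s) (at s within S)"
  unfolding radius_def radius_ds_def
  by (rule DERIV_cong, (rule derivative_intros)+) (simp add: algebra_simps del: One_nat_def)

lemma has_real_derivative_radius_ds:
  "(radius_ds a has_real_derivative alpha a * radius a s + 1) (at s within S)"
  unfolding radius_def radius_ds_def
  by (rule DERIV_cong, (rule derivative_intros)+)
    (simp add: algebra_simps univ_fun_rec_numeral(1) del: One_nat_def)

lemma has_real_derivative_clock:
  "(clock a has_real_derivative radius a s) (at s within S)"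
  unfolding radius_def clock_def
  by (rule DERIV_cong, (rule derivative_intros)+) (simp add: algebra_simps del: One_nat_def)

lemma has_real_derivative_radius_da:
  "(radius_da a has_real_derivative radius_dads a s) (at s within S)"
  unfolding radius_da_def radius_dads_def
  by (rule DERIV_cong, (rule derivative_intros)+) (simp add: algebra_simps del: One_nat_def)

lemma has_real_derivative_radius_dads:
  "(radius_dads a has_real_derivative alpha a * radius_da a s + 2 * a * radius a s) (at s within S)"
  unfolding radius_da_def radius_dads_def radius_def
  by (rule DERIV_cong, (rule derivative_intros)+)
    (simp add: field_simps univ_fun_rec_numeral power2_eq_square power3_eq_cube del: One_nat_def)

lemma has_real_derivative_clock_da:
  "(clock_da a has_real_derivative radius_da a s) (at s within S)"
  unfolding radius_da_def clock_da_def
  by (rule DERIV_cong, (rule derivative_intros)+) (simp add: algebra_simps del: One_nat_def)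

lemma has_real_derivative_alpha: "(alpha has_real_derivative 2 * a) (at a within S)"
  unfolding alpha_def by (auto intro!: derivative_eq_intros)

lemma has_real_derivative_radius_param:
  "((\<lambda>a. radius a s) has_real_derivative radius_da a s) (at a within S)"
  unfolding radius_def radius_da_def
  by (rule DERIV_cong, (rule derivative_intros has_real_derivative_alpha)+)
    (simp add: field_simps power2_eq_square del: One_nat_def)

lemma has_real_derivative_clock_param:
  "((\<lambda>a. clock a s) has_real_derivative clock_da a s) (at a within S)"
  unfolding clock_def clock_da_def
  by (rule DERIV_cong, (rule derivative_intros has_real_derivative_alpha)+)
    (simp add: field_simps power2_eq_square del: One_nat_def)

lemma radius_at_0:
  "radius a 0 = xA" "radius_ds a 0 = xA * a" "clock a 0 = 0"
  "radius_da a 0 = 0" "radius_dads a 0 = xA" "clock_da a 0 = 0"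
  by (simp_all add: radius_def radius_ds_def clock_def radius_da_def radius_dads_def clock_da_def
      univ_fun_at_0_numeral univ_fun_at_0)

lemma alpha_escape_speed: "alpha a = a\<^sup>2 - escape_speed\<^sup>2"
  using xA_pos by (simp add: alpha_def escape_speed_def)

lemma escape_speed_pos: "0 < escape_speed"
  using xA_pos by (simp add: escape_speed_def)

lemma radius_ds_squared: "(radius_ds a s)\<^sup>2 = alpha a * (radius a s)\<^sup>2 + 2 * radius a s"
proof -
  let ?f = "\<lambda>s. (radius_ds a s)\<^sup>2 - alpha a * (radius a s)\<^sup>2 - 2 * radius a s"
  have "\<forall>s. (?f has_real_derivative 0) (at s)"
    apply (rule allI, rule DERIV_cong)
     apply (rule derivative_intros has_real_derivative_radius has_real_derivative_radius_ds)+
    apply (simp add: algebra_simps)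
    done
  then have "?f s = ?f 0" by (rule DERIV_isconst_all)
  then show ?thesis using xA_pos by (simp add: radius_at_0 alpha_def power2_eq_square field_simps)
qed

lemma radius_ds_mult_radius_dads:
  "radius_ds a s * radius_dads a s = a * (radius a s)\<^sup>2 + alpha a * radius a s * radius_da a s + radius_da a s"
proof -
  let ?f = "\<lambda>s. radius_ds a s * radius_dads a s - a * (radius a s)\<^sup>2
    - alpha a * radius a s * radius_da a s - radius_da a s"
  have "\<forall>s. (?f has_real_derivative 0) (at s)"
    apply (rule allI, rule DERIV_cong)
     apply (rule derivative_intros has_real_derivative_radius has_real_derivative_radius_ds
        has_real_derivative_radius_da has_real_derivative_radius_dads)+
    apply (simp add: algebra_simps)
    done
  then have "?f s = ?f 0" by (rule DERIV_isconst_all)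
  then show ?thesis using xA_pos by (simp add: radius_at_0 alpha_def power2_eq_square field_simps)
qed

lemma continuous_on_radius: "continuous_on S (radius a)"
  using has_real_derivative_radius by (intro has_real_derivative_imp_continuous_on)

lemma continuous_on_radius_joint: "continuous_on S (\<lambda>z. radius (fst z) (snd z))"
  unfolding radius_def alpha_def by (intro continuous_intros)

lemma isCont_radius_da_joint: "isCont (\<lambda>z. radius_da (fst z) (snd z)) z"
proof -
  have "continuous_on UNIV (\<lambda>z. radius_da (fst z) (snd z))"
    unfolding radius_da_def alpha_def by (intro continuous_intros)
  then show ?thesis using continuous_on_eq_continuous_at[OF open_UNIV] by blast
qed

lemma isCont_clock_da_joint: "isCont (\<lambda>z. clock_da (fst z) (snd z)) z"
proof -
  have "continuous_on UNIV (\<lambda>z. clock_da (fst z) (snd z))"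
    unfolding clock_da_def alpha_def by (intro continuous_intros)
  then show ?thesis using continuous_on_eq_continuous_at[OF open_UNIV] by blast
qed

lemma radius_mult_energy_nonneg: "0 \<le> radius a s * (alpha a * radius a s + 2)"
proof -
  have "radius a s * (alpha a * radius a s + 2) = (radius_ds a s)\<^sup>2"
    unfolding radius_ds_squared by (simp add: power2_eq_square algebra_simps)
  then show ?thesis by simp
qed

lemma radius_nonneg: "0 \<le> radius a s"
proof (rule ccontr)
  assume neg: "\<not> 0 \<le> radius a s"
  note quadratic = radius_mult_energy_nonneg[of a]
  from quadratic[of s] neg have "alpha a * radius a s \<le> - 2"
    by (simp add: zero_le_mult_iff)
  moreover from this neg have "0 < alpha a"
    using mult_nonpos_nonpos[of "alpha a" "radius a s"] by force
  ultimately have "0 < alpha a" "radius a s \<le> - 1 / alpha a"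
    by (simp_all add: field_simps)
  moreover have "- 1 / alpha a \<le> radius a 0"
  proof -
    have "0 < 1 / alpha a" using \<open>0 < alpha a\<close> by simp
    then show ?thesis using xA_pos radius_at_0(1)[of a] by linarith
  qed
  ultimately have between: "radius a s \<le> - 1 / alpha a" "- 1 / alpha a \<le> radius a 0"
    by simp_all
  obtain u where "radius a u = - 1 / alpha a"
  proof (cases "0 \<le> s")
    case True
    from IVT2'[of "radius a", OF between True continuous_on_radius] that show ?thesis by blast
  next
    case False
    from IVT'[of "radius a", OF between _ continuous_on_radius] False that show ?thesis by force
  qed
  with quadratic[of u] \<open>0 < alpha a\<close> show False by (simp add: field_simps)
qed

lemma mono_clock: "mono (clock a)"
proof (rule monoI)
  fix u v :: real assume "u \<le> v"
  then show "clock a u \<le> clock a v"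
    by (rule DERIV_nonneg_imp_nondecreasing) (use has_real_derivative_clock radius_nonneg in blast)
qed

lemma strict_mono_clock: "strict_mono (clock a)"
proof (rule strict_monoI)
  fix u v :: real assume "u < v"
  have "clock a u \<le> clock a v"
    using \<open>u < v\<close> mono_clock by (simp add: monoD)
  moreover have "clock a u \<noteq> clock a v"
  proof
    assume "clock a u = clock a v"
    then have const: "clock a w = clock a u" if "w \<in> {u<..<v}" for w
      using that mono_clock by (metis greaterThanLessThan_iff less_imp_le monoD order_antisym)
    have radius_0: "radius a w = 0" if "w \<in> {u<..<v}" for w
      using has_real_derivative_const_on_interval[OF has_real_derivative_clock const that] .
    have radius_ds_0: "radius_ds a w = 0" if "w \<in> {u<..<v}" for w
      using has_real_derivative_const_on_interval[OF has_real_derivative_radius radius_0 that] .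
    have "(u + v) / 2 \<in> {u<..<v}" using \<open>u < v\<close> by simp
    from has_real_derivative_const_on_interval[OF has_real_derivative_radius_ds radius_ds_0 this]
      radius_0[OF this]
    show False by simp
  qed
  ultimately show "clock a u < clock a v" by simp
qed

definition velocity :: "real \<Rightarrow> real \<Rightarrow> real" where
  "velocity a s = radius_ds a s / radius a s"

lemma has_real_derivative_velocity:
  assumes "radius a s \<noteq> 0"
  shows "(velocity a has_real_derivative - 1 / radius a s) (at s)"
proof -
  have "(velocity a has_real_derivative
     ((alpha a * radius a s + 1) * radius a s - radius_ds a s * radius_ds a s) / (radius a s * radius a s)) (at s)"
    unfolding velocity_def[abs_def]
    using DERIV_divide[OF has_real_derivative_radius_ds has_real_derivative_radius assms] by simp
  moreover have "((alpha a * radius a s + 1) * radius a s - radius_ds a s * radius_ds a s)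
      / (radius a s * radius a s) = - 1 / radius a s"
    using assms radius_ds_squared[of a s] by (simp add: field_simps power2_eq_square)
  ultimately show ?thesis by simp
qed

lemma velocity_squared:
  assumes "radius a s \<noteq> 0"
  shows "(velocity a s)\<^sup>2 = alpha a + 2 / radius a s"
proof -
  have "(velocity a s)\<^sup>2 = (alpha a * (radius a s)\<^sup>2 + 2 * radius a s) / (radius a s)\<^sup>2"
    unfolding velocity_def power_divide radius_ds_squared ..
  also have "\<dots> = alpha a + 2 / radius a s"
    using assms by (simp add: field_simps power2_eq_square)
  finally show ?thesis .
qed

lemma velocity_at_0: "velocity a 0 = a"
  using xA_pos by (simp add: velocity_def radius_at_0)

definition fict_time :: "real \<Rightarrow> real \<Rightarrow> real" where
  "fict_time a = inv (clock a)"

lemma fict_time_clock [simp]: "fict_time a (clock a s) = s"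
  unfolding fict_time_def using strict_mono_clock by (simp add: strict_mono_imp_inj_on)

lemma clock_fict_time:
  assumes "clock a u \<le> t" "t \<le> clock a v"
  shows "clock a (fict_time a t) = t"
proof -
  have "clock a u \<le> clock a v" using assms by linarith
  then have "u \<le> v" using strict_mono_clock by (simp add: strict_mono_less_eq)
  then obtain s where "clock a s = t"
    using IVT[of "clock a" u t v] assms
    by (auto intro: DERIV_isCont[OF has_real_derivative_clock])
  then show ?thesis by auto
qed

lemma has_real_derivative_fict_time:
  assumes "radius a s \<noteq> 0"
  shows "(fict_time a has_real_derivative inverse (radius a s)) (at (clock a s))"
proof (rule DERIV_inverse_function[where f="clock a" and g="fict_time a"])
  show "(clock a has_real_derivative radius a s) (at (fict_time a (clock a s)))"
    by (simp add: has_real_derivative_clock)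
  show "radius a s \<noteq> 0" by (rule assms)
  show "clock a (s - 1) < clock a s" "clock a s < clock a (s + 1)"
    using strict_mono_clock by (simp_all add: strict_mono_less)
  show "clock a (fict_time a y) = y" if "clock a (s - 1) < y" "y < clock a (s + 1)" for y
    using that by (intro clock_fict_time[of a "s - 1" _ "s + 1"]) auto
  show "isCont (fict_time a) (clock a s)"
    by (rule isCont_inverse_function[where d=1])
      (auto intro: DERIV_isCont[OF has_real_derivative_clock])
qed

lemma line_sol_regularized:
  assumes "s0 \<le> s1" and pos: "\<And>s. s \<in> {s0..s1} \<Longrightarrow> 0 < radius a s"
  shows "line_sol (\<lambda>t. radius a (fict_time a t)) (\<lambda>t. velocity a (fict_time a t)) (clock a s0) (clock a s1)"
  unfolding line_sol_def
proof (intro conjI ballI)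
  show "clock a s0 \<le> clock a s1" using assms mono_clock by (simp add: monoD)
  fix t assume t: "t \<in> {clock a s0..clock a s1}"
  define s where "s = fict_time a t"
  have ts: "t = clock a s" unfolding s_def using t by (auto intro: clock_fict_time[symmetric])
  have "s \<in> {s0..s1}" using t strict_mono_clock unfolding ts by (auto simp: strict_mono_less_eq)
  then have r: "0 < radius a s" by (rule pos)
  then have rn: "radius a s \<noteq> 0" by simp
  have df: "(fict_time a has_real_derivative inverse (radius a s)) (at t within {clock a s0..clock a s1})"
    unfolding ts using has_real_derivative_fict_time[OF rn] by (rule has_field_derivative_at_within)
  have "(radius a has_real_derivative radius_ds a s) (at (fict_time a t))"
    "(velocity a has_real_derivative - 1 / radius a s) (at (fict_time a t))"
    using has_real_derivative_radius has_real_derivative_velocity[OF rn] by (simp_all add: ts)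
  from DERIV_chain2[OF this(1) df] DERIV_chain2[OF this(2) df] r
  show "0 < radius a (fict_time a t)"
    "((\<lambda>t. radius a (fict_time a t)) has_real_derivative velocity a (fict_time a t))
      (at t within {clock a s0..clock a s1})"
    "((\<lambda>t. velocity a (fict_time a t)) has_real_derivative - 1 / (radius a (fict_time a t))\<^sup>2)
      (at t within {clock a s0..clock a s1})"
    by (simp_all add: ts velocity_def divide_inverse power2_eq_square)
qed

definition traj :: "real \<Rightarrow> real \<Rightarrow> real" where
  "traj a t = radius a (fict_time a t)"

definition traj_velocity :: "real \<Rightarrow> real \<Rightarrow> real" where
  "traj_velocity a t = velocity a (fict_time a t)"

lemma traj_at_0: "traj a 0 = xA" "traj_velocity a 0 = a"
  using fict_time_clock[of a 0] by (simp_all add: traj_def traj_velocity_def radius_at_0 velocity_at_0)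

lemma radius_sensitivity_pos:
  assumes "0 < s0" and pos: "\<And>s. 0 \<le> s \<Longrightarrow> s \<le> s0 \<Longrightarrow> 0 < radius a s"
  shows "0 < radius_da a s0 - radius_ds a s0 * clock_da a s0 / radius a s0"
proof -
  let ?x = "radius a" and ?x1 = "radius_ds a" and ?p = "radius_da a" and ?p1 = "radius_dads a"
    and ?q = "clock_da a"
  define Nj where "Nj s = ?p s * ?x s - ?x1 s * ?q s" for s
  define Nk where "Nk s = ?p1 s * ?x s - ?x1 s * ?p s + ?q s" for s
  define J where "J s = Nj s / ?x s" for s
  define K where "K s = Nk s / (?x s * ?x s)" for s
  have dNj: "(Nj has_real_derivative ?p1 s * ?x s - (alpha a * ?x s + 1) * ?q s) (at s)" for s
    unfolding Nj_def
    by (rule DERIV_cong[OF DERIV_diff[OF DERIV_mult DERIV_mult]], (rule has_real_derivative_radius_da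
        has_real_derivative_radius has_real_derivative_radius_ds has_real_derivative_clock_da)+)
      (simp add: algebra_simps)
  have dNk: "(Nk has_real_derivative 2 * a * (?x s * ?x s)) (at s)" for s
    unfolding Nk_def
    by (rule DERIV_cong[OF DERIV_add[OF DERIV_diff[OF DERIV_mult DERIV_mult]]],
        (rule has_real_derivative_radius_da has_real_derivative_radius_dads has_real_derivative_radius
        has_real_derivative_radius_ds has_real_derivative_clock_da)+)
      (simp add: algebra_simps)
  have "0 < J s0"
  proof (rule cooperative_system_pos[OF \<open>0 < s0\<close>])
    fix s assume s: "0 \<le> s" "s \<le> s0"
    then have ne: "?x s \<noteq> 0" using pos by (metis less_irrefl)
    have energy: "(?x1 s)\<^sup>2 = alpha a * (?x s)\<^sup>2 + 2 * ?x s" by (rule radius_ds_squared)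
    have "(?p1 s * ?x s - (alpha a * ?x s + 1) * ?q s) * ?x s - Nj s * ?x1 s = ?x s * Nk s"
      using energy by (simp add: Nj_def Nk_def algebra_simps power2_eq_square)
    then show "(J has_real_derivative ?x s * K s) (at s)"
      unfolding J_def[abs_def] K_def using DERIV_divide[OF dNj has_real_derivative_radius ne]
      by (simp add: ne field_simps)
    have "2 * a * (?x s * ?x s) * (?x s * ?x s) - Nk s * (?x1 s * ?x s + ?x1 s * ?x s)
        = 2 * ?x s * Nj s"
      using energy radius_ds_mult_radius_dads[of a s]
      by (simp add: Nj_def Nk_def algebra_simps power2_eq_square)
    moreover have "(?x s * ?x s) \<noteq> 0" using ne by simp
    note DERIV_divide[OF dNk[of s]
        DERIV_mult[OF has_real_derivative_radius[of a s UNIV] has_real_derivative_radius[of a s UNIV]] this]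
    ultimately show "(K has_real_derivative 2 / (?x s)\<^sup>2 * J s) (at s)"
      unfolding K_def[abs_def] J_def using ne by (simp add: field_simps power2_eq_square)
    show "0 < ?x s" by (rule pos[OF s])
    show "0 \<le> 2 / (?x s)\<^sup>2" by simp
  next
    show "J 0 = 0" "K 0 = 1" using xA_pos by (simp_all add: J_def K_def Nj_def Nk_def radius_at_0)
  qed
  then show ?thesis using pos[of s0] \<open>0 < s0\<close> by (simp add: J_def Nj_def field_simps)
qed

end

section \<open>Transfer to the target\<close>

locale direct_transfer = radial_launch +
  fixes xB :: real
  assumes xB_pos: "0 < xB" and xB_less: "xB < xA"
begin

lemma bound_radius_reaches_target:
  assumes above: "\<And>s. 0 \<le> s \<Longrightarrow> xB < radius a s" and "alpha a < 0"
  shows False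
proof -
  have pos: "0 < radius a s" if "0 \<le> s" for s using above[OF that] xB_pos by simp
  define M where "M = - 2 / alpha a"
  have "0 < M" using \<open>alpha a < 0\<close> by (simp add: M_def)
  have radius_le: "radius a s \<le> M" if "0 \<le> s" for s
  proof -
    have "0 \<le> alpha a * radius a s + 2"
      using radius_mult_energy_nonneg[of a s] pos[OF that] by (simp add: zero_le_mult_iff)
    then show ?thesis using \<open>alpha a < 0\<close> by (simp add: M_def field_simps)
  qed
  text \<open>In fictitious time the velocity decreases at rate at least \<open>1 / M\<close>.\<close>
  have velocity_le: "velocity a s \<le> a - s / M" if "0 \<le> s" for s
  proof -
    have "velocity a s + s / M \<le> velocity a 0 + 0 / M"
    proof (rule DERIV_nonpos_imp_nonincreasing[OF that])
      fix u assume u: "0 \<le> u" "u \<le> s"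
      have "1 / M \<le> 1 / radius a u" using radius_le[OF u(1)] pos[OF u(1)] by (simp add: frac_le)
      then show "\<exists>y. ((\<lambda>s. velocity a s + s / M) has_real_derivative y) (at u) \<and> y \<le> 0"
        using pos[OF u(1)] \<open>0 < M\<close>
        by (intro exI[of _ "- 1 / radius a u + 1 / M"])
          (auto intro!: derivative_eq_intros has_real_derivative_velocity)
    qed
    then show ?thesis by (simp add: velocity_at_0)
  qed
  define K where "K = 1 + 2 / xB"
  define s0 where "s0 = M * max 0 (a + K)"
  have "0 \<le> s0" using \<open>0 < M\<close> by (simp add: s0_def)
  have "velocity a s0 \<le> - K"
    using velocity_le[OF \<open>0 \<le> s0\<close>] \<open>0 < M\<close> by (auto simp: s0_def)
  moreover have "1 < K" using xB_pos by (simp add: K_def)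
  ultimately have "K\<^sup>2 \<le> (velocity a s0)\<^sup>2"
    using power_mono[of K "- velocity a s0" 2] by simp
  also have "\<dots> = alpha a + 2 / radius a s0" using velocity_squared pos[OF \<open>0 \<le> s0\<close>] by simp
  also have "\<dots> < 2 / xB"
  proof -
    have "2 / radius a s0 < 2 / xB"
      using above[OF \<open>0 \<le> s0\<close>] xB_pos by (intro divide_strict_left_mono) auto
    then show ?thesis using \<open>alpha a < 0\<close> by linarith
  qed
  finally have "K\<^sup>2 < 2 / xB" .
  moreover have "K < K\<^sup>2" using \<open>1 < K\<close> by (simp add: power2_eq_square)
  ultimately show False by (simp add: K_def)
qed

lemma falling_radius_reaches_target:
  assumes above: "\<And>s. 0 \<le> s \<Longrightarrow> xB < radius a s" and "a < 0"
  shows False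
proof -
  have pos: "0 < radius a s" if "0 \<le> s" for s using above[OF that] xB_pos by simp
  have velocity_le: "velocity a s \<le> a" if "0 \<le> s" for s
    using DERIV_nonpos_imp_nonincreasing[OF that, of "velocity a"] pos
      has_real_derivative_velocity[of a] by (force simp: velocity_at_0)
  define s1 where "s1 = (xA - xB) / (xB * - a)"
  have "0 < xB * - a" using xB_pos \<open>a < 0\<close> by (simp add: mult_pos_neg)
  then have "0 \<le> s1" unfolding s1_def using xB_less by (intro divide_nonneg_pos) auto
  text \<open>Since \<open>d radius / ds = radius * velocity\<close>, the radius drops at rate at least \<open>- a * xB\<close>.\<close>
  have "radius a s1 - a * xB * s1 \<le> radius a 0 - a * xB * 0"
  proof (rule DERIV_nonpos_imp_nonincreasing[OF \<open>0 \<le> s1\<close>])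
    fix u assume u: "0 \<le> u" "u \<le> s1"
    have "radius_ds a u = radius a u * velocity a u" using pos[OF u(1)] by (simp add: velocity_def)
    also have "\<dots> \<le> radius a u * a" using velocity_le[OF u(1)] pos[OF u(1)] by simp
    also have "\<dots> \<le> xB * a" using above[OF u(1)] \<open>a < 0\<close> by simp
    finally show "\<exists>y. ((\<lambda>s. radius a s - a * xB * s) has_real_derivative y) (at u) \<and> y \<le> 0"
      by (intro exI[of _ "radius_ds a u - a * xB"])
        (auto intro!: derivative_eq_intros has_real_derivative_radius simp: mult.commute)
  qed
  moreover have "a * xB * s1 = xB - xA" using \<open>a < 0\<close> xB_pos by (simp add: s1_def field_simps)
  ultimately have "radius a s1 \<le> xB" by (simp add: radius_at_0)
  then show False using above[OF \<open>0 \<le> s1\<close>] by simp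
qed

lemma radius_reaches_target:
  assumes "a < escape_speed"
  shows "\<exists>s\<ge>0. radius a s \<le> xB"
proof (rule ccontr)
  assume "\<not> ?thesis"
  then have above: "\<And>s. 0 \<le> s \<Longrightarrow> xB < radius a s" by force
  show False
  proof (cases "alpha a < 0")
    case True
    then show False using bound_radius_reaches_target[OF above] by simp
  next
    case False
    then have "escape_speed\<^sup>2 \<le> a\<^sup>2" by (simp add: alpha_escape_speed)
    have "a < 0"
    proof (rule ccontr)
      assume "\<not> a < 0"
      then have "a\<^sup>2 < escape_speed\<^sup>2" using assms by (simp add: power_strict_mono)
      then show False using \<open>escape_speed\<^sup>2 \<le> a\<^sup>2\<close> by simp
    qed
    then show False using falling_radius_reaches_target[OF above] by simp
  qed
qed

definition first_hit :: "real \<Rightarrow> real" where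
  "first_hit a = Inf {s. 0 \<le> s \<and> radius a s \<le> xB}"

lemma first_hit:
  assumes "a < escape_speed"
  shows "0 < first_hit a" "radius a (first_hit a) = xB"
    "\<And>u. 0 \<le> u \<Longrightarrow> u < first_hit a \<Longrightarrow> xB < radius a u"
proof -
  define Z where "Z = {s. 0 \<le> s \<and> radius a s \<le> xB}"
  have "Z \<noteq> {}" using radius_reaches_target[OF assms] by (auto simp: Z_def)
  moreover have bdd: "bdd_below Z" by (rule bdd_belowI[of _ 0]) (simp add: Z_def)
  moreover have "closed Z"
    unfolding Z_def Collect_conj_eq
    by (intro closed_Int closed_Collect_le continuous_on_const continuous_on_id continuous_on_radius)
  ultimately have hit_in_Z: "first_hit a \<in> Z"
    unfolding first_hit_def Z_def[symmetric] by (rule closed_contains_Inf)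
  show above: "xB < radius a u" if "0 \<le> u" "u < first_hit a" for u
  proof (rule ccontr)
    assume "\<not> xB < radius a u"
    then have "first_hit a \<le> u"
      unfolding first_hit_def Z_def[symmetric] using that by (intro cInf_lower[OF _ bdd]) (simp add: Z_def)
    then show False using that by simp
  qed
  have "first_hit a \<noteq> 0" using hit_in_Z xB_less by (auto simp: Z_def radius_at_0)
  then show "0 < first_hit a" using hit_in_Z by (simp add: Z_def)
  show "radius a (first_hit a) = xB"
  proof (rule ccontr)
    assume "radius a (first_hit a) \<noteq> xB"
    then have "radius a (first_hit a) < xB" using hit_in_Z by (simp add: Z_def)
    then obtain u where "0 \<le> u" "u \<le> first_hit a" "radius a u = xB"
      using IVT2'[of "radius a" "first_hit a" xB 0] \<open>0 < first_hit a\<close> xB_less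
      by (auto simp: radius_at_0 intro: continuous_on_radius)
    then show False using above[of u] \<open>radius a (first_hit a) < xB\<close> by (cases "u = first_hit a") auto
  qed
qed

lemma radius_first_hit_ge:
  "a < escape_speed \<Longrightarrow> 0 \<le> u \<Longrightarrow> u \<le> first_hit a \<Longrightarrow> xB \<le> radius a u"
  using first_hit[of a] by (cases "u = first_hit a") (auto simp: less_le)

lemma radius_ds_first_hit_neg:
  assumes "a < escape_speed"
  shows "radius_ds a (first_hit a) < 0"
proof -
  let ?s = "first_hit a"
  have "- 2 / xA * xB > -2" using xB_less xA_pos by (simp add: field_simps)
  moreover have "alpha a * xB \<ge> - 2 / xA * xB"
    using xB_pos by (intro mult_right_mono) (auto simp: alpha_def)
  ultimately have "0 < xB * (alpha a * xB + 2)" using xB_pos by simp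
  then have "radius_ds a ?s \<noteq> 0"
    using radius_ds_squared[of a ?s] first_hit(2)[OF assms] by (auto simp: power2_eq_square algebra_simps)
  moreover have "\<not> 0 < radius_ds a ?s"
  proof
    assume "0 < radius_ds a ?s"
    then obtain d where d: "0 < d" "\<And>h. 0 < h \<Longrightarrow> h < d \<Longrightarrow> radius a (?s - h) < radius a ?s"
      using DERIV_pos_inc_left[OF has_real_derivative_radius] by blast
    define h where "h = min (d / 2) (?s / 2)"
    have "0 < h" "h < d" "h < ?s" using d first_hit(1)[OF assms] by (auto simp: h_def)
    then show False
      using d(2)[of h] first_hit(2)[OF assms] first_hit(3)[OF assms, of "?s - h"] by simp
  qed
  ultimately show ?thesis by simp
qed

definition transfer_time :: "real \<Rightarrow> real" where
  "transfer_time a = clock a (first_hit a)"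

lemma transfer_time_pos: "a < escape_speed \<Longrightarrow> 0 < transfer_time a"
  using strict_mono_clock first_hit(1) by (metis radius_at_0(3) strict_mono_def transfer_time_def)

lemma fict_time_range:
  assumes "a < escape_speed" "t \<in> {0..transfer_time a}"
  shows "fict_time a t \<in> {0..first_hit a}"
proof -
  have "clock a (fict_time a t) = t"
    using assms by (intro clock_fict_time[of a 0 _ "first_hit a"]) (auto simp: radius_at_0 transfer_time_def)
  then have "clock a 0 \<le> clock a (fict_time a t)" "clock a (fict_time a t) \<le> clock a (first_hit a)"
    using assms by (simp_all add: radius_at_0 transfer_time_def)
  then show ?thesis by (simp add: strict_mono_less_eq[OF strict_mono_clock])
qed

lemma line_sol_traj:
  assumes "a < escape_speed"
  shows "line_sol (traj a) (traj_velocity a) 0 (transfer_time a)"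
  using line_sol_regularized[of 0 "first_hit a" a] first_hit(1)[OF assms]
    radius_first_hit_ge[OF assms] xB_pos
  by (force simp: traj_def[abs_def] traj_velocity_def[abs_def] transfer_time_def radius_at_0)

lemma traj_transfer_time:
  assumes "a < escape_speed"
  shows "traj a (transfer_time a) = xB" "traj_velocity a (transfer_time a) < 0"
  using first_hit(2)[OF assms] radius_ds_first_hit_neg[OF assms] xB_pos
  by (simp_all add: traj_def traj_velocity_def transfer_time_def velocity_def divide_neg_pos)

lemma traj_above_target:
  assumes "a < escape_speed" "0 \<le> t" "t < transfer_time a"
  shows "xB < traj a t"
proof -
  have "clock a (fict_time a t) = t"
    using assms by (intro clock_fict_time[of a 0 _ "first_hit a"]) (auto simp: radius_at_0 transfer_time_def)
  then have "clock a (fict_time a t) < clock a (first_hit a)"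
    using assms by (simp add: transfer_time_def)
  then have "fict_time a t < first_hit a" by (simp add: strict_mono_less[OF strict_mono_clock])
  then show ?thesis
    using first_hit(3)[OF assms(1)] fict_time_range[OF assms(1), of t] assms by (simp add: traj_def)
qed

lemma line_sol_reaching_target_time:
  assumes "a < escape_speed" and sol: "line_sol x v 0 T"
    and init: "x 0 = xA" "v 0 = a" and "x T = xB"
  shows "T = transfer_time a"
proof -
  note traj_sol = line_sol_traj[OF assms(1)]
  define m where "m = min T (transfer_time a)"
  have m: "0 \<le> m" "m \<le> T" "m \<le> transfer_time a"
    using line_sol_le[OF sol] transfer_time_pos[OF assms(1)] by (auto simp: m_def)
  have agree: "x s = traj a s \<and> v s = traj_velocity a s" if "s \<in> {0..m}" for s
    using line_sol_unique[OF line_sol_restrict[OF sol m(1,2)] line_sol_restrict[OF traj_sol m(1,3)]]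
      init traj_at_0 that by simp
  show ?thesis
  proof (cases T "transfer_time a" rule: linorder_cases)
    case less
    then have "x T = traj a T" using agree[of T] m by (simp add: m_def)
    then show ?thesis
      using traj_above_target[OF assms(1), of T] less line_sol_le[OF sol] \<open>x T = xB\<close> by simp
  next
    case greater
    then have "x (transfer_time a) = xB" "v (transfer_time a) < 0"
      using agree[of "transfer_time a"] m traj_transfer_time[OF assms(1)] by (simp_all add: m_def)
    then have "x T < xB"
      using line_sol_decreasing[OF sol _ _ greater] transfer_time_pos[OF assms(1)] by simp
    then show ?thesis using \<open>x T = xB\<close> by simp
  qed
qed

lemma T_DR_eq_transfer_time:
  assumes "a < escape_speed"
  shows "T_DR xA xB a = transfer_time a"
proof -
  have "{T. 0 < T \<and> (\<exists>x v. line_sol x v 0 T \<and> x 0 = xA \<and> v 0 = a \<and> x T = xB)} = {transfer_time a}"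
    using line_sol_reaching_target_time[OF assms] transfer_time_pos[OF assms]
      line_sol_traj[OF assms] traj_at_0 traj_transfer_time(1)[OF assms] by blast
  then show ?thesis by (simp add: T_DR_def)
qed

lemma line_sol_reaching_target_below_escape:
  assumes sol: "line_sol x v 0 T" and "x 0 = xA" "v 0 = a" "x T = xB"
  shows "a < escape_speed"
proof (rule ccontr)
  assume "\<not> a < escape_speed"
  then have "escape_speed\<^sup>2 \<le> a\<^sup>2" "0 < a"
    using escape_speed_pos by (auto intro: power_mono)
  then have "2 / x 0 \<le> (v 0)\<^sup>2" using xA_pos assms(2,3) by (simp add: escape_speed_def)
  then have "x 0 \<le> x T" using line_sol_above_escape_nondecreasing[OF sol] \<open>0 < a\<close> assms(3) by simp
  then show False using assms(2,4) xB_less by simp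
qed

lemma direct_arc_iff:
  fixes q p :: "real \<Rightarrow> 'a::euclidean_space"
  assumes e: "norm e = 1"
  shows "(tA < tB \<and> kepler_sol q p tA tB \<and> q tA = xA *\<^sub>R e \<and> q tB = xB *\<^sub>R e \<and> direct_arc q tA tB)
    \<longleftrightarrow> (\<exists>vA<escape_speed. tB - tA = T_DR xA xB vA \<and>
          (\<exists>x v. line_sol x v tA tB \<and> x tA = xA \<and> v tA = vA \<and>
             (\<forall>t\<in>{tA..tB}. q t = x t *\<^sub>R e \<and> p t = v t *\<^sub>R e)))"
    (is "?arc \<longleftrightarrow> ?line")
proof
  assume ?arc
  then have "tA < tB" "kepler_sol q p tA tB" "q tA = xA *\<^sub>R e" "q tB = xB *\<^sub>R e" "direct_arc q tA tB"
    by simp_all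
  note ray = direct_kepler_arc_on_ray[OF e this(1,2,3,4) xA_pos this(5)]
  define x where "x t = inner (q t) e" for t
  define v where "v t = inner (p t) e" for t
  have "inner e e = 1" using e by (simp add: dot_square_norm)
  then have ends: "x tA = xA" "x tB = xB"
    using \<open>q tA = xA *\<^sub>R e\<close> \<open>q tB = xB *\<^sub>R e\<close> by (simp_all add: x_def)
  have sol: "line_sol x v tA tB" using ray(1) by (simp add: x_def[abs_def] v_def[abs_def])
  note shifted = line_sol_shift[OF sol]
  have below: "v tA < escape_speed"
    using line_sol_reaching_target_below_escape[OF shifted] ends by simp
  moreover have "tB - tA = T_DR xA xB (v tA)"
    using line_sol_reaching_target_time[OF below shifted] ends T_DR_eq_transfer_time[OF below] by simp
  moreover have "\<forall>t\<in>{tA..tB}. q t = x t *\<^sub>R e \<and> p t = v t *\<^sub>R e"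
    using ray(2) by (simp add: x_def v_def)
  ultimately show ?line using sol ends(1) by blast
next
  assume ?line
  then obtain vA x v where "vA < escape_speed" and T: "tB - tA = T_DR xA xB vA"
    and sol: "line_sol x v tA tB" and init: "x tA = xA" "v tA = vA"
    and qp: "\<forall>t\<in>{tA..tB}. q t = x t *\<^sub>R e \<and> p t = v t *\<^sub>R e" by blast
  have T': "tB - tA = transfer_time vA" using T T_DR_eq_transfer_time[OF \<open>vA < escape_speed\<close>] by simp
  then have "tA < tB" using transfer_time_pos[OF \<open>vA < escape_speed\<close>] by simp
  have "line_sol (\<lambda>t. x (t + tA)) (\<lambda>t. v (t + tA)) 0 (transfer_time vA)"
    using line_sol_shift[OF sol] T' by simp
  from line_sol_unique[OF this line_sol_traj[OF \<open>vA < escape_speed\<close>], of "transfer_time vA"]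
  have "x (transfer_time vA + tA) = traj vA (transfer_time vA)"
    using init traj_at_0 transfer_time_pos[OF \<open>vA < escape_speed\<close>] by simp
  moreover have "transfer_time vA + tA = tB" using T' by simp
  ultimately have "x tB = xB" using traj_transfer_time(1)[OF \<open>vA < escape_speed\<close>] by simp
  then show ?arc
    using line_sol_imp_direct_kepler_arc[OF e sol] qp init \<open>tA < tB\<close> by auto
qed

lemma eventually_first_hit_less:
  assumes "a0 < escape_speed" "first_hit a0 < y"
  shows "eventually (\<lambda>a. first_hit a < y) (at a0)"
proof -
  let ?s0 = "first_hit a0"
  obtain d where d: "0 < d" "\<And>h. 0 < h \<Longrightarrow> h < d \<Longrightarrow> radius a0 (?s0 + h) < radius a0 ?s0"
    using DERIV_neg_dec_right[OF has_real_derivative_radius radius_ds_first_hit_neg[OF assms(1)]] by blast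
  obtain h where h: "0 < h" "h < d" "?s0 + h < y"
    using field_lbound_gt_zero[of d "y - ?s0"] d(1) assms(2) by auto
  have "radius a0 (?s0 + h) < xB" using d(2)[OF h(1,2)] first_hit(2)[OF assms(1)] by simp
  moreover have "isCont (\<lambda>a. radius a (?s0 + h)) a0"
    using has_real_derivative_radius_param by (rule DERIV_isCont)
  ultimately have "eventually (\<lambda>a. radius a (?s0 + h) < xB) (at a0)"
    by (intro order_tendstoD(2)) (auto simp: isCont_def)
  moreover have "eventually (\<lambda>a. a < escape_speed) (at a0)"
    using order_tendstoD(2)[OF tendsto_ident_at assms(1)] .
  ultimately show ?thesis
  proof eventually_elim
    case (elim a)
    have "\<not> ?s0 + h < first_hit a"
      using first_hit(3)[OF elim(2), of "?s0 + h"] first_hit(1)[OF assms(1)] h(1) elim(1) by auto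
    moreover have "first_hit a \<noteq> ?s0 + h" using first_hit(2)[OF elim(2)] elim(1) by auto
    ultimately show ?case using h(3) by simp
  qed
qed

lemma eventually_first_hit_greater:
  assumes "a0 < escape_speed" "y < first_hit a0"
  shows "eventually (\<lambda>a. y < first_hit a) (at a0)"
proof (cases "y < 0")
  case True
  have "eventually (\<lambda>a. a < escape_speed) (at a0)"
    using order_tendstoD(2)[OF tendsto_ident_at assms(1)] .
  then show ?thesis by eventually_elim (use True first_hit(1) in force)
next
  case False
  define S where "S = cbox (a0 - 1, 0) (a0 + 1, y)"
  have "continuous_on {0..y} (\<lambda>u. radius a0 u - xB)"
    by (intro continuous_on_diff continuous_on_const continuous_on_radius)
  moreover have "{0..y} \<noteq> {}" using False by simp
  ultimately obtain u0 where u0: "u0 \<in> {0..y}" "\<forall>u\<in>{0..y}. radius a0 u0 - xB \<le> radius a0 u - xB"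
    using continuous_attains_inf[OF compact_Icc] by blast
  define m where "m = radius a0 u0 - xB"
  have "0 < m" using first_hit(3)[OF assms(1), of u0] u0(1) assms(2) by (simp add: m_def)
  have "uniformly_continuous_on S (\<lambda>z. radius (fst z) (snd z))"
    unfolding S_def by (intro compact_uniformly_continuous continuous_on_radius_joint compact_cbox)
  then obtain \<delta> where "0 < \<delta>" and \<delta>:
    "\<And>z z'. z \<in> S \<Longrightarrow> z' \<in> S \<Longrightarrow> dist z' z < \<delta> \<Longrightarrow>
      dist (radius (fst z') (snd z')) (radius (fst z) (snd z)) < m"
    unfolding uniformly_continuous_on_def using \<open>0 < m\<close> by metis
  have "eventually (\<lambda>a. dist a a0 < min \<delta> 1) (at a0)"
    unfolding eventually_at using \<open>0 < \<delta>\<close> by (intro exI[of _ "min \<delta> 1"]) auto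
  moreover have "eventually (\<lambda>a. a < escape_speed) (at a0)"
    using order_tendstoD(2)[OF tendsto_ident_at assms(1)] .
  ultimately show ?thesis
  proof eventually_elim
    case (elim a)
    have "xB < radius a u" if u: "u \<in> {0..y}" for u
    proof -
      have "(a0, u) \<in> S" "(a, u) \<in> S" using elim(1) u by (auto simp: S_def dist_real_def)
      then have "\<bar>radius a u - radius a0 u\<bar> < m"
        using \<delta>[of "(a0, u)" "(a, u)"] elim(1) by (simp add: dist_Pair_Pair dist_real_def)
      moreover have "m \<le> radius a0 u - xB" using u0(2) u by (simp add: m_def)
      ultimately show ?thesis by linarith
    qed
    then show ?case
      using first_hit(1,2)[OF elim(2)] by (metis atLeastAtMost_iff less_imp_le not_le order.irrefl)
  qed
qed

lemma tendsto_first_hit: "a0 < escape_speed \<Longrightarrow> (first_hit \<longlongrightarrow> first_hit a0) (at a0)"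
  by (rule order_tendstoI) (auto intro: eventually_first_hit_less eventually_first_hit_greater)

lemma has_real_derivative_transfer_time:
  assumes a0: "a0 < escape_speed"
  defines "s0 \<equiv> first_hit a0"
  shows "(transfer_time has_real_derivative
      clock_da a0 s0 - radius a0 s0 * radius_da a0 s0 / radius_ds a0 s0) (at a0)"
proof -
  note hit = tendsto_first_hit[OF a0]
  obtain \<xi>1 \<eta>1 where \<xi>1: "(\<xi>1 \<longlongrightarrow> a0) (at a0)" and \<eta>1: "(\<eta>1 \<longlongrightarrow> s0) (at a0)"
    and radius_diff: "\<And>a. radius a (first_hit a) - radius a0 s0
      = (a - a0) * radius_da (\<xi>1 a) (first_hit a) + (first_hit a - s0) * radius_ds a0 (\<eta>1 a)"
    using MVT_two_variables[OF has_real_derivative_radius_param has_real_derivative_radius hit]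
    unfolding s0_def by blast
  obtain \<xi>2 \<eta>2 where \<xi>2: "(\<xi>2 \<longlongrightarrow> a0) (at a0)" and \<eta>2: "(\<eta>2 \<longlongrightarrow> s0) (at a0)"
    and clock_diff: "\<And>a. transfer_time a - transfer_time a0
      = (a - a0) * clock_da (\<xi>2 a) (first_hit a) + (first_hit a - s0) * radius a0 (\<eta>2 a)"
    using MVT_two_variables[OF has_real_derivative_clock_param has_real_derivative_clock hit]
    unfolding s0_def transfer_time_def by blast
  define D where "D a = clock_da (\<xi>2 a) (first_hit a)
    - radius a0 (\<eta>2 a) * radius_da (\<xi>1 a) (first_hit a) / radius_ds a0 (\<eta>1 a)" for a
  have neg: "radius_ds a0 s0 < 0" unfolding s0_def by (rule radius_ds_first_hit_neg[OF a0])
  have lim_ds: "((\<lambda>a. radius_ds a0 (\<eta>1 a)) \<longlongrightarrow> radius_ds a0 s0) (at a0)"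
    using \<eta>1 by (rule isCont_tendsto_compose[OF DERIV_isCont[OF has_real_derivative_radius_ds]])
  have "((\<lambda>a. clock_da (\<xi>2 a) (first_hit a)) \<longlongrightarrow> clock_da a0 s0) (at a0)"
    using isCont_tendsto_compose[OF isCont_clock_da_joint[of "(a0, s0)"] tendsto_Pair[OF \<xi>2 hit[folded s0_def]]]
    by (simp add: s0_def)
  moreover have "((\<lambda>a. radius_da (\<xi>1 a) (first_hit a)) \<longlongrightarrow> radius_da a0 s0) (at a0)"
    using isCont_tendsto_compose[OF isCont_radius_da_joint[of "(a0, s0)"] tendsto_Pair[OF \<xi>1 hit[folded s0_def]]]
    by (simp add: s0_def)
  moreover have "((\<lambda>a. radius a0 (\<eta>2 a)) \<longlongrightarrow> radius a0 s0) (at a0)"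
    using \<eta>2 by (rule isCont_tendsto_compose[OF DERIV_isCont[OF has_real_derivative_radius]])
  ultimately have "(D \<longlongrightarrow> clock_da a0 s0 - radius a0 s0 * radius_da a0 s0 / radius_ds a0 s0) (at a0)"
    unfolding D_def using neg by (intro tendsto_intros lim_ds) auto
  moreover have "eventually (\<lambda>a. (transfer_time a - transfer_time a0) / (a - a0) = D a) (at a0)"
  proof -
    have "eventually (\<lambda>a. a < escape_speed) (at a0)"
      using order_tendstoD(2)[OF tendsto_ident_at a0] .
    moreover have "eventually (\<lambda>a. radius_ds a0 (\<eta>1 a) < 0) (at a0)"
      using order_tendstoD(2)[OF lim_ds neg] .
    moreover have "eventually (\<lambda>a. a \<noteq> a0) (at a0)" by (rule eventually_neq_at_within)
    ultimately show ?thesis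
    proof eventually_elim
      case (elim a)
      have "radius a (first_hit a) = radius a0 s0"
        using first_hit(2)[OF elim(1)] first_hit(2)[OF a0] by (simp add: s0_def)
      then have hs: "first_hit a - s0
          = - (a - a0) * radius_da (\<xi>1 a) (first_hit a) / radius_ds a0 (\<eta>1 a)"
        using radius_diff[of a] elim(2) by (simp add: field_simps)
      have "transfer_time a - transfer_time a0 = (a - a0) * D a"
        unfolding clock_diff hs D_def using elim(2) by (simp add: field_simps)
      then show ?case using elim(3) by simp
    qed
  qed
  ultimately show ?thesis
    unfolding has_field_derivative_iff by (simp add: tendsto_cong)
qed

lemma transfer_time_deriv_pos:
  assumes a0: "a0 < escape_speed"
  defines "s0 \<equiv> first_hit a0"
  shows "0 < clock_da a0 s0 - radius a0 s0 * radius_da a0 s0 / radius_ds a0 s0"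
proof -
  have neg: "radius_ds a0 s0 < 0" unfolding s0_def by (rule radius_ds_first_hit_neg[OF a0])
  have "radius a0 s0 = xB" unfolding s0_def by (rule first_hit(2)[OF a0])
  have J: "0 < radius_da a0 s0 - radius_ds a0 s0 * clock_da a0 s0 / radius a0 s0"
    using radius_sensitivity_pos[OF first_hit(1)[OF a0]] radius_first_hit_ge[OF a0] xB_pos
    unfolding s0_def by force
  have "clock_da a0 s0 - radius a0 s0 * radius_da a0 s0 / radius_ds a0 s0
      = (- xB / radius_ds a0 s0) * (radius_da a0 s0 - radius_ds a0 s0 * clock_da a0 s0 / radius a0 s0)"
    using neg \<open>radius a0 s0 = xB\<close> xB_pos by (simp add: field_simps)
  moreover have "0 < - xB / radius_ds a0 s0" using neg xB_pos by (simp add: divide_pos_neg)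
  then have "0 < (- xB / radius_ds a0 s0)
      * (radius_da a0 s0 - radius_ds a0 s0 * clock_da a0 s0 / radius a0 s0)"
    using J by (rule mult_pos_pos)
  ultimately show ?thesis by simp
qed

lemma T_DR_has_positive_derivative:
  assumes "a < escape_speed"
  shows "\<exists>D>0. (T_DR xA xB has_real_derivative D) (at a)"
proof (intro exI conjI)
  let ?s = "first_hit a"
  show "0 < clock_da a ?s - radius a ?s * radius_da a ?s / radius_ds a ?s"
    by (rule transfer_time_deriv_pos[OF assms])
  show "(T_DR xA xB has_real_derivative clock_da a ?s - radius a ?s * radius_da a ?s / radius_ds a ?s) (at a)"
  proof (rule has_field_derivative_transform_within_open[OF has_real_derivative_transfer_time[OF assms]])
    show "open {..<escape_speed}" "a \<in> {..<escape_speed}" using assms by simp_all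
    show "transfer_time x = T_DR xA xB x" if "x \<in> {..<escape_speed}" for x
      using T_DR_eq_transfer_time that by simp
  qed
qed

lemma strict_mono_on_T_DR: "strict_mono_on {..<escape_speed} (T_DR xA xB)"
proof (rule strict_mono_onI)
  fix r s assume rs: "r \<in> {..<escape_speed}" "s \<in> {..<escape_speed}" "r < s"
  show "T_DR xA xB r < T_DR xA xB s"
  proof (rule DERIV_pos_imp_increasing[OF \<open>r < s\<close>])
    fix x assume "r \<le> x" "x \<le> s"
    then have "x < escape_speed" using rs by simp
    from T_DR_has_positive_derivative[OF this] obtain D
      where "0 < D" "(T_DR xA xB has_real_derivative D) (at x)" by blast
    then show "\<exists>y. (T_DR xA xB has_real_derivative y) (at x) \<and> 0 < y" by blast
  qed
qed

lemma transfer_time_le: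
  assumes "a < 0"
  shows "transfer_time a \<le> (xA - xB) / - a"
proof -
  have "a < escape_speed" using assms escape_speed_pos by simp
  then have "traj a (transfer_time a) - traj a 0 \<le> traj_velocity a 0 * (transfer_time a - 0)"
    using line_sol_le_linear[OF line_sol_traj] transfer_time_pos by (simp add: less_imp_le)
  then have "- a * transfer_time a \<le> xA - xB"
    using traj_at_0 traj_transfer_time(1)[OF \<open>a < escape_speed\<close>] by simp
  then show ?thesis using assms by (simp add: field_simps)
qed

text \<open>An outgoing orbit must first climb to its apocentre \<open>2 / (escape_speed\<^sup>2 - a\<^sup>2)\<close>.\<close>
lemma transfer_time_ge:
  assumes "0 < a" "a < escape_speed"
  shows "(2 / (escape_speed\<^sup>2 - a\<^sup>2) - xA) / a \<le> transfer_time a"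
proof -
  note sol = line_sol_traj[OF assms(2)]
  obtain t1 where t1: "0 \<le> t1" "t1 \<le> transfer_time a" "traj_velocity a t1 = 0"
    using IVT2'[of "traj_velocity a" "transfer_time a" 0 0] line_sol_continuous_on(2)[OF sol]
      traj_transfer_time(2)[OF assms(2)] transfer_time_pos[OF assms(2)] traj_at_0 assms(1) by force
  then have t1': "t1 \<in> {0..transfer_time a}" by simp
  have "a\<^sup>2 < escape_speed\<^sup>2" using assms by (simp add: power_strict_mono)
  moreover have "- 2 / traj a t1 = a\<^sup>2 - escape_speed\<^sup>2"
    using line_sol_energy[OF sol t1'] t1(3) traj_at_0 alpha_escape_speed[of a]
    by (simp add: alpha_def)
  ultimately have "2 / (escape_speed\<^sup>2 - a\<^sup>2) = traj a t1"
    using line_solD(1)[OF sol t1'] by (simp add: field_simps)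
  also have "traj a t1 \<le> xA + a * t1"
    using line_sol_le_linear[OF sol t1'] traj_at_0 by simp
  also have "\<dots> \<le> xA + a * transfer_time a" using assms(1) t1(2) by simp
  finally show ?thesis using assms(1) by (simp add: pos_divide_le_eq mult.commute)
qed

lemma transfer_time_tendsto_0: "(transfer_time \<longlongrightarrow> 0) at_bot"
proof (rule tendsto_sandwich[where f="\<lambda>_. 0" and h="\<lambda>a. (xA - xB) / - a"])
  show "eventually (\<lambda>a. 0 \<le> transfer_time a) at_bot"
    using transfer_time_pos escape_speed_pos
    by (intro eventually_at_bot_linorderI[of 0]) (auto intro: less_imp_le)
  show "eventually (\<lambda>a. transfer_time a \<le> (xA - xB) / - a) at_bot"
    using transfer_time_le by (intro eventually_at_bot_linorderI[of "-1"]) auto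
  have "filterlim (\<lambda>a::real. - a) at_infinity at_bot"
    by (rule filterlim_at_top_imp_at_infinity[OF filterlim_uminus_at_top_at_bot])
  then show "((\<lambda>a. (xA - xB) / - a) \<longlongrightarrow> 0) at_bot"
    by (rule tendsto_divide_0[OF tendsto_const])
qed simp

lemma filterlim_transfer_time: "filterlim transfer_time at_top (at_left escape_speed)"
proof -
  let ?vE = escape_speed
  let ?lower = "\<lambda>a. (1 / ?vE) * (- xA + inverse ((?vE\<^sup>2 - a\<^sup>2) / 2))"
  have near: "eventually (\<lambda>a. 0 < a \<and> a < ?vE) (at_left ?vE)"
    using escape_speed_pos by (intro eventually_at_leftI[of 0]) auto
  have "filterlim (\<lambda>a. inverse ((?vE\<^sup>2 - a\<^sup>2) / 2)) at_top (at_left ?vE)"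
  proof (rule filterlim_inverse_at_top)
    show "((\<lambda>a. (?vE\<^sup>2 - a\<^sup>2) / 2) \<longlongrightarrow> 0) (at_left ?vE)"
      by (auto intro!: tendsto_eq_intros)
    show "eventually (\<lambda>a. 0 < (?vE\<^sup>2 - a\<^sup>2) / 2) (at_left ?vE)"
      using near by eventually_elim (simp add: power_strict_mono)
  qed
  then have "filterlim ?lower at_top (at_left ?vE)"
    using escape_speed_pos
    by (intro filterlim_tendsto_pos_mult_at_top[OF tendsto_const] filterlim_tendsto_add_at_top[OF tendsto_const])
      simp_all
  moreover have "eventually (\<lambda>a. ?lower a \<le> transfer_time a) (at_left ?vE)"
    using near
  proof eventually_elim
    case (elim a)
    have "0 < ?vE\<^sup>2 - a\<^sup>2" using elim by (simp add: power_strict_mono)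
    moreover have "2 / ?vE\<^sup>2 = xA" using xA_pos by (simp add: escape_speed_def)
    moreover have "2 / ?vE\<^sup>2 \<le> 2 / (?vE\<^sup>2 - a\<^sup>2)"
      using \<open>0 < ?vE\<^sup>2 - a\<^sup>2\<close> escape_speed_pos by (intro divide_left_mono) auto
    ultimately have "xA \<le> 2 / (?vE\<^sup>2 - a\<^sup>2)" by simp
    have "?lower a = (2 / (?vE\<^sup>2 - a\<^sup>2) - xA) / ?vE"
      using \<open>0 < ?vE\<^sup>2 - a\<^sup>2\<close> escape_speed_pos by (simp add: field_simps)
    also have "\<dots> \<le> (2 / (?vE\<^sup>2 - a\<^sup>2) - xA) / a"
      using \<open>xA \<le> 2 / (?vE\<^sup>2 - a\<^sup>2)\<close> elim by (intro divide_left_mono) auto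
    also have "\<dots> \<le> transfer_time a" using transfer_time_ge elim by blast
    finally show ?case .
  qed
  ultimately show ?thesis by (rule filterlim_at_top_mono)
qed

lemma T_DR_tendsto_0: "(T_DR xA xB \<longlongrightarrow> 0) at_bot"
proof -
  have "eventually (\<lambda>a. transfer_time a = T_DR xA xB a) at_bot"
    using T_DR_eq_transfer_time escape_speed_pos by (intro eventually_at_bot_linorderI[of 0]) auto
  then show ?thesis using transfer_time_tendsto_0 tendsto_cong by blast
qed

lemma filterlim_T_DR: "filterlim (T_DR xA xB) at_top (at_left escape_speed)"
proof -
  have "eventually (\<lambda>a. transfer_time a = T_DR xA xB a) (at_left escape_speed)"
    using T_DR_eq_transfer_time escape_speed_pos
    by (intro eventually_at_leftI[of 0]) auto
  then show ?thesis using filterlim_transfer_time filterlim_cong by blast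
qed

end

theorem proposition2:
  fixes xA xB vE :: real and e :: "'a::euclidean_space"
  assumes "0 < xB" and "xB < xA"
    and "vE = sqrt (2 / xA)"
    and "norm e = 1"
  shows
    "(\<forall>vA<vE. 0 < T_DR xA xB vA \<and>
        (\<exists>x v. line_sol x v 0 (T_DR xA xB vA) \<and> x 0 = xA \<and> v 0 = vA
               \<and> x (T_DR xA xB vA) = xB))
   \<and> (\<forall>(q :: real \<Rightarrow> 'a) p tA tB.
        (tA < tB \<and> kepler_sol q p tA tB \<and> q tA = xA *\<^sub>R e \<and> q tB = xB *\<^sub>R e
           \<and> direct_arc q tA tB)
        \<longleftrightarrow>
        (\<exists>vA<vE. tB - tA = T_DR xA xB vA \<and>
           (\<exists>x v. line_sol x v tA tB \<and> x tA = xA \<and> v tA = vA \<and>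
                 (\<forall>t\<in>{tA..tB}. q t = x t *\<^sub>R e \<and> p t = v t *\<^sub>R e))))
   \<and> strict_mono_on {..<vE} (T_DR xA xB)
   \<and> (\<forall>vA<vE. \<exists>D>0. (T_DR xA xB has_real_derivative D) (at vA))
   \<and> (T_DR xA xB \<longlongrightarrow> 0) at_bot
   \<and> filterlim (T_DR xA xB) at_top (at_left vE)"
proof -
  interpret direct_transfer xA xB
    using assms(1,2) by unfold_locales simp_all
  have vE: "vE = escape_speed" using assms(3) by (simp add: escape_speed_def)
  have "0 < T_DR xA xB vA \<and> (\<exists>x v. line_sol x v 0 (T_DR xA xB vA) \<and> x 0 = xA \<and> v 0 = vA
      \<and> x (T_DR xA xB vA) = xB)" if "vA < escape_speed" for vA
    using T_DR_eq_transfer_time[OF that] transfer_time_pos[OF that] line_sol_traj[OF that]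
      traj_at_0 traj_transfer_time(1)[OF that] by auto
  then show ?thesis
    unfolding vE using direct_arc_iff[OF assms(4)] strict_mono_on_T_DR T_DR_has_positive_derivative
      T_DR_tendsto_0 filterlim_T_DR by blast
qed

end
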